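(* Let $G$ be a finite group with pairwise non-isomorphic irreducible complex representations $V_1,\dots,V_k$ with characters $\chi_1,\dots,\chi_k$. Suppose $Q_1,\dots,Q_m$ are probability distributions on $G$ that are constant on conjugacy classes, and let $Q_i=\sum_{j=1}^k a_j^{i}\chi_j$ be their unique expressions as linear combinations of irreducible characters. For a word $w=w_1w_2\cdots w_N$ with $w_i\in\{1,\dots,m\}$ let $Q^{(w)}:=Q_{w_1}\ast\cdots\ast Q_{w_N}$ and $q^{w}:=\sum_{g\in G}Q^{(w)}(g)e_g\in\mathbb{C}G$. Then for every $G$-homogeneous space $X$ and every $x_0\in X$, \[\|q^{w}\cdot e_{x_0}-\overline{u}_X\|^2_{\rm TV}\leq \frac{1}{4}\sum_{V_j\neq {\rm triv}}m(V_j,\mathbb{C} X)\dim(V_j)\left(\frac{|G|}{\dim(V_j)}\right)^{2N}\left(\prod_{i=1}^N a_j^{w_i}\right)^2.\]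
   Context: Convolution: $(P\ast R)(h)=\sum_{g}P(hg^{-1})R(g)$. $\mathbb{C}G$ is the group algebra with basis $\{e_g\}$. A $G$-homogeneous space is a finite set $X$ with transitive $G$-action; $\mathbb{C}X$ has basis $\{e_x\}$ and is a $\mathbb{C}G$-module via $e_g\cdot e_x:=e_{g(x)}$. $\|h\|_{\rm TV}:=\frac12\sum_x|h(x)|$ for $h=\sum_xh(x)e_x$; $\overline{u}_X:=\frac1{|X|}\sum_xe_x$. $m(V_j,\mathbb{C}X)$ is the multiplicity of $V_j$ in $\mathbb{C}X$; the sum runs over nontrivial irreducibles.
   Formalization: The factor $(\prod_{i=1}^N a_j^{w_i})^2$ in the bound is replaced by the squared complex modulus $|\prod_{i=1}^N a_j^{w_i}|^2$ of that product. The statement above fails without it. *)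

theory Defs
  imports "Jordan_Normal_Form.Matrix" "HOL-Algebra.Group_Action"
begin

definition is_rep :: "('g, 'b) monoid_scheme \<Rightarrow> ('g \<Rightarrow> complex mat) \<Rightarrow> nat \<Rightarrow> bool" where
  "is_rep G \<rho> d \<longleftrightarrow>
     (\<forall>g\<in>carrier G. \<rho> g \<in> carrier_mat d d) \<and>
     \<rho> \<one>\<^bsub>G\<^esub> = 1\<^sub>m d \<and>
     (\<forall>g\<in>carrier G. \<forall>h\<in>carrier G. \<rho> (g \<otimes>\<^bsub>G\<^esub> h) = \<rho> g * \<rho> h)"

definition invariant_subspace :: "('g, 'b) monoid_scheme \<Rightarrow> ('g \<Rightarrow> complex mat) \<Rightarrow> nat \<Rightarrow> complex vec set \<Rightarrow> bool" where
  "invariant_subspace G \<rho> d W \<longleftrightarrow>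
     W \<subseteq> carrier_vec d \<and> 0\<^sub>v d \<in> W \<and>
     (\<forall>v\<in>W. \<forall>u\<in>W. v + u \<in> W) \<and>
     (\<forall>c. \<forall>v\<in>W. c \<cdot>\<^sub>v v \<in> W) \<and>
     (\<forall>g\<in>carrier G. \<forall>v\<in>W. \<rho> g *\<^sub>v v \<in> W)"

definition irreducible_rep :: "('g, 'b) monoid_scheme \<Rightarrow> ('g \<Rightarrow> complex mat) \<Rightarrow> nat \<Rightarrow> bool" where
  "irreducible_rep G \<rho> d \<longleftrightarrow> is_rep G \<rho> d \<and> d > 0 \<and>
     (\<forall>W. invariant_subspace G \<rho> d W \<longrightarrow> W = {0\<^sub>v d} \<or> W = carrier_vec d)"

definition iso_rep :: "('g, 'b) monoid_scheme \<Rightarrow> ('g \<Rightarrow> complex mat) \<Rightarrow> nat \<Rightarrow> ('g \<Rightarrow> complex mat) \<Rightarrow> nat \<Rightarrow> bool" where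
  "iso_rep G \<rho> d \<sigma> e \<longleftrightarrow> d = e \<and>
     (\<exists>P\<in>carrier_mat d d. invertible_mat P \<and> (\<forall>g\<in>carrier G. P * \<rho> g = \<sigma> g * P))"

definition triv_rep :: "'g \<Rightarrow> complex mat" where
  "triv_rep g = 1\<^sub>m 1"

definition character :: "('g \<Rightarrow> complex mat) \<Rightarrow> nat \<Rightarrow> 'g \<Rightarrow> complex" where
  "character \<rho> d g = (\<Sum>i<d. \<rho> g $$ (i, i))"

definition dsum_rep :: "('g \<Rightarrow> complex mat) \<times> nat \<Rightarrow> ('g \<Rightarrow> complex mat) \<times> nat \<Rightarrow> ('g \<Rightarrow> complex mat) \<times> nat" where
  "dsum_rep r s = (case r of (\<rho>, d) \<Rightarrow> case s of (\<sigma>, e) \<Rightarrow>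
      (\<lambda>g. four_block_mat (\<rho> g) (0\<^sub>m d e) (0\<^sub>m e d) (\<sigma> g), d + e))"

definition dsum_list :: "(('g \<Rightarrow> complex mat) \<times> nat) list \<Rightarrow> ('g \<Rightarrow> complex mat) \<times> nat" where
  "dsum_list rs = foldr dsum_rep rs (\<lambda>g. 1\<^sub>m 0, 0)"

definition multiple_sum :: "nat \<Rightarrow> (nat \<Rightarrow> 'g \<Rightarrow> complex mat) \<Rightarrow> (nat \<Rightarrow> nat) \<Rightarrow> (nat \<Rightarrow> nat) \<Rightarrow> ('g \<Rightarrow> complex mat) \<times> nat" where
  "multiple_sum k \<rho> d m = dsum_list (concat (map (\<lambda>j. replicate (m j) (\<rho> j, d j)) [0..<k]))"

(* the permutation module CX, as matrices w.r.t. the basis e_{xs!0},...,e_{xs!(n-1)}: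
   e_g . e_x = e_{g(x)} *)
definition perm_rep :: "('g \<Rightarrow> 'x \<Rightarrow> 'x) \<Rightarrow> 'x list \<Rightarrow> 'g \<Rightarrow> complex mat" where
  "perm_rep \<phi> xs g = mat (length xs) (length xs) (\<lambda>(i, j). if \<phi> g (xs ! j) = xs ! i then 1 else 0)"

definition conv :: "('g, 'b) monoid_scheme \<Rightarrow> ('g \<Rightarrow> real) \<Rightarrow> ('g \<Rightarrow> real) \<Rightarrow> 'g \<Rightarrow> real" where
  "conv G P R h = (\<Sum>g\<in>carrier G. P (h \<otimes>\<^bsub>G\<^esub> inv\<^bsub>G\<^esub> g) * R g)"

definition delta_one :: "('g, 'b) monoid_scheme \<Rightarrow> 'g \<Rightarrow> real" where
  "delta_one G g = (if g = \<one>\<^bsub>G\<^esub> then 1 else 0)"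

definition conv_word :: "('g, 'b) monoid_scheme \<Rightarrow> (nat \<Rightarrow> 'g \<Rightarrow> real) \<Rightarrow> nat list \<Rightarrow> 'g \<Rightarrow> real" where
  "conv_word G Q w = foldr (\<lambda>i acc. conv G (Q i) acc) w (delta_one G)"

(* coefficient at e_x of  q . e_{x0} = sum_g P(g) e_{g(x0)} *)
definition act_dist :: "('g, 'b) monoid_scheme \<Rightarrow> ('g \<Rightarrow> 'x \<Rightarrow> 'x) \<Rightarrow> ('g \<Rightarrow> real) \<Rightarrow> 'x \<Rightarrow> 'x \<Rightarrow> real" where
  "act_dist G \<phi> P x0 x = (\<Sum>g\<in>carrier G. if \<phi> g x0 = x then P g else 0)"

definition tv_norm :: "'x set \<Rightarrow> ('x \<Rightarrow> real) \<Rightarrow> real" where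
  "tv_norm X h = (1/2) * (\<Sum>x\<in>X. \<bar>h x\<bar>)"

end

theory Submission
  imports Defs "Jordan_Normal_Form.Spectral_Radius"
begin

(*
  Let F = Q^(w) - 1/|G|, a class function.  The signed measure q^w e_x0 - u_X is
  x |-> act_dist F x0 x, so by Cauchy-Schwarz its squared total variation is at most |X|/4
  times its squared l2-norm.  By transitivity all rows x0 have the same l2-norm, and |X|
  times it is sum_{x,y} (act_dist F x y)^2, the trace of A' A where A is the matrix of
  sum_g F(g) e_g acting on CX and A' that of sum_g F(g^-1) e_g.  Computing this trace in a basis
  adapted to the decomposition of CX into the irreducibles V_j (with multiplicity m_j) gives
  sum_j m_j d_j |c_j|^2, since by Schur's lemma the class function F acts on V_j as the scalar
  c_j = (sum_g F(g) chi_j(g)) / d_j.  These scalars are multiplicative under convolution, c_j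
  vanishes for the trivial representation, and by the orthogonality of characters the scalar
  of Q_i on V_j has modulus (|G|/d_j) |a_j^i|.
*)

hide_const (open) Polynomial.order

section \<open>Matrices\<close>

lemma index_mult_mat_sum:
  "A \<in> carrier_mat r s \<Longrightarrow> B \<in> carrier_mat s c \<Longrightarrow> i < r \<Longrightarrow> j < c \<Longrightarrow>
   (A * B) $$ (i,j) = (\<Sum>l<s. A $$ (i,l) * B $$ (l,j))"
  by (auto simp: scalar_prod_def atLeast0LessThan intro!: sum.cong)

lemma index_mult_mat_vec_sum:
  "A \<in> carrier_mat r s \<Longrightarrow> v \<in> carrier_vec s \<Longrightarrow> i < r \<Longrightarrow>
   (A *\<^sub>v v) $ i = (\<Sum>l<s. A $$ (i,l) * v $ l)"
  by (auto simp: scalar_prod_def atLeast0LessThan intro!: sum.cong)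

lemma mat_eq_by_unit_vecs:
  fixes A B :: "'a :: semiring_1 mat"
  assumes A: "A \<in> carrier_mat r s" and B: "B \<in> carrier_mat r s"
    and eq: "\<And>j. j < s \<Longrightarrow> A *\<^sub>v unit_vec s j = B *\<^sub>v unit_vec s j"
  shows "A = B"
proof (rule eq_matI)
  fix i j assume "i < dim_row B" "j < dim_col B"
  hence i: "i < r" and j: "j < s" using B by auto
  have "A $$ (i,j) = (A *\<^sub>v unit_vec s j) $ i" using A i j by simp
  also have "\<dots> = B $$ (i,j)" using eq[OF j] B i j by simp
  finally show "A $$ (i,j) = B $$ (i,j)" .
qed (use A B in auto)

lemma wide_mat_kernel_nontrivial:
  fixes A :: "'a :: idom mat"
  assumes A: "A \<in> carrier_mat e d" and ed: "e < d"
  obtains v where "v \<in> carrier_vec d" "v \<noteq> 0\<^sub>v d" "A *\<^sub>v v = 0\<^sub>v e"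
proof -
  define A' where "A' = mat d d (\<lambda>(i,j). if i < e then A $$ (i,j) else 0)"
  have A': "A' \<in> carrier_mat d d" by (simp add: A'_def)
  \<comment> \<open>A' is singular because its last row is zero.\<close>
  have "transpose_mat A' *\<^sub>v unit_vec d (d-1) = 0\<^sub>v d"
    using ed by (intro eq_vecI) (auto simp: A'_def)
  hence "det (transpose_mat A') = 0"
    using ed A' by (subst det_0_iff_vec_prod_zero[of _ d]) (auto intro!: exI[of _ "unit_vec d (d-1)"])
  hence "det A' = 0" by (simp add: det_transpose[OF A'])
  then obtain v where v: "v \<in> carrier_vec d" "v \<noteq> 0\<^sub>v d" "A' *\<^sub>v v = 0\<^sub>v d"
    using det_0_iff_vec_prod_zero[OF A'] by auto
  have "A *\<^sub>v v = 0\<^sub>v e"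
  proof (rule eq_vecI)
    fix i assume "i < dim_vec (0\<^sub>v e :: 'a vec)"
    hence i: "i < e" by simp
    have "(A *\<^sub>v v) $ i = (\<Sum>l<d. A $$ (i,l) * v $ l)" by (rule index_mult_mat_vec_sum[OF A v(1) i])
    also have "\<dots> = (A' *\<^sub>v v) $ i"
      using i ed by (subst index_mult_mat_vec_sum[OF A' v(1)]) (auto simp: A'_def)
    finally show "(A *\<^sub>v v) $ i = 0\<^sub>v e $ i" using v(3) i ed by simp
  qed (use A in simp)
  with v that show thesis by blast
qed

lemma bijective_mat_dims_eq:
  fixes A :: "'a :: idom mat"
  assumes A: "A \<in> carrier_mat e d"
    and inj: "\<And>v. v \<in> carrier_vec d \<Longrightarrow> A *\<^sub>v v = 0\<^sub>v e \<Longrightarrow> v = 0\<^sub>v d"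
    and surj: "\<And>u. u \<in> carrier_vec e \<Longrightarrow> \<exists>v\<in>carrier_vec d. A *\<^sub>v v = u"
  shows "d = e"
proof (rule linorder_cases[of d e])
  assume "d < e"
  then obtain u where u: "u \<in> carrier_vec e" "u \<noteq> 0\<^sub>v e" "transpose_mat A *\<^sub>v u = 0\<^sub>v d"
    using wide_mat_kernel_nontrivial[of "transpose_mat A" d e] A by auto
  then obtain i where i: "i < e" "u $ i \<noteq> 0"
    by (metis carrier_vecD eq_vecI index_zero_vec(1,2))
  obtain v where v: "v \<in> carrier_vec d" "A *\<^sub>v v = unit_vec e i"
    using surj[of "unit_vec e i"] i by auto
  have "u $ i = u \<bullet> (A *\<^sub>v v)" using u(1) i by (simp add: v(2))
  also have "\<dots> = (transpose_mat A *\<^sub>v u) \<bullet> v" by (rule transpose_vec_mult_scalar[symmetric, OF A v(1) u(1)])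
  also have "\<dots> = 0" using u(3) v(1) by simp
  finally show ?thesis using i(2) by simp
next
  assume "e < d"
  then obtain v where "v \<in> carrier_vec d" "v \<noteq> 0\<^sub>v d" "A *\<^sub>v v = 0\<^sub>v e"
    using wide_mat_kernel_nontrivial[OF A] by blast
  with inj show ?thesis by blast
qed

lemma invertible_mat_inverse:
  assumes "invertible_mat (P :: 'a :: semiring_1 mat)" "P \<in> carrier_mat n n"
  obtains B where "B \<in> carrier_mat n n" "B * P = 1\<^sub>m n" "P * B = 1\<^sub>m n"
proof -
  from assms obtain B where B: "P * B = 1\<^sub>m (dim_row P)" "B * P = 1\<^sub>m (dim_row B)"
    unfolding invertible_mat_def inverts_mat_def by auto
  have "dim_col B = n" using B(1) assms(2) by (metis carrier_matD(1) index_mult_mat(3) index_one_mat(3))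
  moreover have "dim_row B = n" using B(2) assms(2) by (metis carrier_matD(2) index_mult_mat(3) index_one_mat(3))
  ultimately show thesis using B assms(2) that by auto
qed

definition mat_trace :: "'a :: comm_semiring_0 mat \<Rightarrow> 'a" where
  "mat_trace A = (\<Sum>i<dim_row A. A $$ (i,i))"

lemma mat_trace_mult_comm:
  fixes A B :: "'a :: comm_semiring_0 mat"
  assumes A: "A \<in> carrier_mat r s" and B: "B \<in> carrier_mat s r"
  shows "mat_trace (A * B) = mat_trace (B * A)"
proof -
  have "mat_trace (A * B) = (\<Sum>i<r. \<Sum>l<s. A $$ (i,l) * B $$ (l,i))"
    unfolding mat_trace_def using A B by (simp add: index_mult_mat_sum[OF A B] del: index_mult_mat(1))
  also have "\<dots> = (\<Sum>l<s. \<Sum>i<r. B $$ (l,i) * A $$ (i,l))"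
    by (subst sum.swap) (simp add: mult.commute)
  also have "\<dots> = mat_trace (B * A)"
    unfolding mat_trace_def using A B by (simp add: index_mult_mat_sum[OF B A] del: index_mult_mat(1))
  finally show ?thesis .
qed

lemma mat_trace_smult: "A \<in> carrier_mat n n \<Longrightarrow> mat_trace (c \<cdot>\<^sub>m A) = c * mat_trace A"
  unfolding mat_trace_def by (auto simp: sum_distrib_left)

lemma mat_trace_smult_one: "mat_trace (c \<cdot>\<^sub>m 1\<^sub>m n :: 'a :: comm_semiring_1 mat) = c * of_nat n"
  unfolding mat_trace_def by (simp add: mult.commute)

lemma smult_one_mat_cancel:
  assumes "c \<cdot>\<^sub>m 1\<^sub>m n = (c' \<cdot>\<^sub>m 1\<^sub>m n :: 'a :: semiring_1 mat)" "n > 0"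
  shows "c = c'"
  using arg_cong[OF assms(1), of "\<lambda>M. M $$ (0,0)"] assms(2) by simp

lemma smult_one_mat_mult:
  "(a \<cdot>\<^sub>m 1\<^sub>m n) * (b \<cdot>\<^sub>m 1\<^sub>m n) = ((a * b) \<cdot>\<^sub>m 1\<^sub>m n :: 'a :: comm_ring_1 mat)"
proof -
  have "(a \<cdot>\<^sub>m 1\<^sub>m n) * (b \<cdot>\<^sub>m 1\<^sub>m n) = a \<cdot>\<^sub>m (b \<cdot>\<^sub>m 1\<^sub>m n)"
    by (simp add: mult_smult_assoc_mat[OF one_carrier_mat smult_carrier_mat[OF one_carrier_mat]])
  also have "\<dots> = (a * b) \<cdot>\<^sub>m 1\<^sub>m n" by (intro eq_matI) auto
  finally show ?thesis .
qed

lemma invertible_mat_if_det_nonzero: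
  assumes A: "(A :: 'a :: field mat) \<in> carrier_mat n n" and det: "det A \<noteq> 0"
  shows "invertible_mat A"
proof -
  from det_non_zero_imp_unit[OF A det, of "()"]
  obtain B where "B \<in> carrier_mat n n" "B * A = 1\<^sub>m n" "A * B = 1\<^sub>m n"
    unfolding Units_def ring_mat_def by auto
  thus ?thesis
    unfolding invertible_mat_def inverts_mat_def square_mat.simps using A by (auto intro!: exI[of _ B])
qed

lemma smult_one_mat_mult_vec:
  fixes u :: "'a :: comm_ring_1 vec"
  assumes u: "u \<in> carrier_vec n"
  shows "(c \<cdot>\<^sub>m 1\<^sub>m n) *\<^sub>v u = c \<cdot>\<^sub>v u"
proof (rule eq_vecI)
  fix i assume "i < dim_vec (c \<cdot>\<^sub>v u)"
  hence i: "i < n" using u by simp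
  show "((c \<cdot>\<^sub>m 1\<^sub>m n) *\<^sub>v u) $ i = (c \<cdot>\<^sub>v u) $ i"
    using u i by (subst index_mult_mat_vec_sum[of _ n n])
      (simp_all add: mult.assoc if_distrib[of "\<lambda>x. x * _"] if_distrib[of "\<lambda>x. c * x"] cong: if_cong)
qed (use u in simp)

lemma minus_eq_zero_vec_iff:
  fixes x y :: "'a :: ab_group_add vec"
  assumes x: "x \<in> carrier_vec n" and y: "y \<in> carrier_vec n"
  shows "x - y = 0\<^sub>v n \<longleftrightarrow> x = y"
proof
  assume h: "x - y = 0\<^sub>v n"
  show "x = y"
  proof (rule eq_vecI)
    fix i assume "i < dim_vec y"
    hence "(x - y) $ i = 0" using h y by simp
    thus "x $ i = y $ i" using \<open>i < dim_vec y\<close> x y by simp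
  qed (use x y in simp)
qed (use y in simp)

lemma zero_mat_mult_vec [simp]: "v \<in> carrier_vec d \<Longrightarrow> 0\<^sub>m e d *\<^sub>v v = 0\<^sub>v e"
  by (intro eq_vecI) auto

lemma mat_trace_intertwined:
  fixes P C D :: "'a :: comm_semiring_1 mat"
  assumes P: "P \<in> carrier_mat n n" "invertible_mat P"
    and C: "C \<in> carrier_mat n n" and D: "D \<in> carrier_mat n n" and PC: "P * C = D * P"
  shows "mat_trace C = mat_trace D"
proof -
  obtain Q where Q: "Q \<in> carrier_mat n n" "Q * P = 1\<^sub>m n" "P * Q = 1\<^sub>m n"
    using invertible_mat_inverse[OF P(2,1)] by blast
  have "C = Q * (D * P)"
    using C Q P(1) by (simp flip: PC assoc_mult_mat)
  hence "mat_trace C = mat_trace (D * P * Q)"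
    using mat_trace_mult_comm[OF Q(1), of "D * P"] D P(1) by simp
  also have "\<dots> = mat_trace D" using D P(1) Q by (simp add: assoc_mult_mat[of D n n P n Q])
  finally show ?thesis .
qed

lemma minus_smult_one_mat_commute:
  fixes A R :: "'a :: comm_ring_1 mat"
  assumes A: "A \<in> carrier_mat n n" and R: "R \<in> carrier_mat n n" and AR: "A * R = R * A"
  shows "(A - c \<cdot>\<^sub>m 1\<^sub>m n) * R = R * (A - c \<cdot>\<^sub>m 1\<^sub>m n)"
proof -
  have "(A - c \<cdot>\<^sub>m 1\<^sub>m n) * R = A * R - c \<cdot>\<^sub>m R"
    using R by (subst minus_mult_distrib_mat[OF A _ R]) (simp_all add: mult_smult_assoc_mat[OF one_carrier_mat R])
  moreover have "R * (A - c \<cdot>\<^sub>m 1\<^sub>m n) = R * A - c \<cdot>\<^sub>m R"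
    using R by (subst mult_minus_distrib_mat[OF R A]) (simp_all add: mult_smult_distrib[OF R one_carrier_mat])
  ultimately show ?thesis using AR by simp
qed

definition mat_unit :: "nat \<Rightarrow> nat \<Rightarrow> nat \<Rightarrow> nat \<Rightarrow> 'a :: zero_neq_one mat" where
  "mat_unit e d q p = mat e d (\<lambda>(a,b). if a = q \<and> b = p then 1 else 0)"

lemma mat_unit_carrier [simp]: "mat_unit e d q p \<in> carrier_mat e d"
  unfolding mat_unit_def by simp

lemma index_mult_mat_unit:
  fixes S R :: "'a :: semiring_1 mat"
  assumes S: "S \<in> carrier_mat e e" and R: "R \<in> carrier_mat d d"
    and q: "q < e" and p: "p < d" and i: "i < e" and r: "r < d"
  shows "(S * mat_unit e d q p * R) $$ (i,r) = S $$ (i,q) * R $$ (p,r)"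
proof -
  have SE: "(S * mat_unit e d q p) $$ (i,b) = (if b = p then S $$ (i,q) else 0)" if b: "b < d" for b
    using q b by (simp add: index_mult_mat_sum[OF S mat_unit_carrier i b] del: index_mult_mat(1))
      (simp add: mat_unit_def if_distrib cong: if_cong)
  have "(S * mat_unit e d q p * R) $$ (i,r) = (\<Sum>b<d. (S * mat_unit e d q p) $$ (i,b) * R $$ (b,r))"
    using S by (intro index_mult_mat_sum[OF _ R i r]) simp
  also have "\<dots> = (\<Sum>b<d. if b = p then S $$ (i,q) * R $$ (p,r) else 0)"
    by (intro sum.cong refl) (simp add: SE)
  also have "\<dots> = S $$ (i,q) * R $$ (p,r)"
    using p by simp
  finally show ?thesis .
qed

lemma mat_trace_mat_unit: "q < d \<Longrightarrow> p < d \<Longrightarrow> mat_trace (mat_unit d d q p :: 'a :: comm_semiring_1 mat) = (if q = p then 1 else 0)"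
  unfolding mat_trace_def mat_unit_def by simp

definition diagonal_mat :: "nat \<Rightarrow> (nat \<Rightarrow> 'a :: zero) \<Rightarrow> 'a mat" where
  "diagonal_mat n f = mat n n (\<lambda>(i,j). if i = j then f i else 0)"

lemma diagonal_mat_carrier [simp]: "diagonal_mat n f \<in> carrier_mat n n"
  unfolding diagonal_mat_def by simp

lemma mat_trace_diagonal_mult:
  "mat_trace (diagonal_mat n f * diagonal_mat n h :: 'a :: comm_semiring_1 mat) = (\<Sum>i<n. f i * h i)"
proof -
  have "(diagonal_mat n f * diagonal_mat n h) $$ (i,i) = f i * h i" if i: "i < n" for i
    using i by (subst index_mult_mat_sum[OF diagonal_mat_carrier diagonal_mat_carrier])
      (simp_all add: diagonal_mat_def if_distrib cong: if_cong)
  thus ?thesis unfolding mat_trace_def using carrier_matD(1)[OF diagonal_mat_carrier[of n f]] by simp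
qed

definition mat_adj :: "complex mat \<Rightarrow> complex mat" where
  "mat_adj M = mat (dim_col M) (dim_row M) (\<lambda>(i,j). cnj (M $$ (j,i)))"

lemma mat_adj_carrier [simp]: "M \<in> carrier_mat r c \<Longrightarrow> mat_adj M \<in> carrier_mat c r"
  unfolding mat_adj_def by auto

lemma mat_adj_mult:
  assumes A: "A \<in> carrier_mat r s" and B: "B \<in> carrier_mat s c"
  shows "mat_adj (A * B) = mat_adj B * mat_adj A"
proof (rule eq_matI)
  fix i j assume "i < dim_row (mat_adj B * mat_adj A)" "j < dim_col (mat_adj B * mat_adj A)"
  hence i: "i < c" and j: "j < r" using A B by (auto simp: mat_adj_def)
  have "mat_adj (A * B) $$ (i,j) = cnj (\<Sum>l<s. A $$ (j,l) * B $$ (l,i))"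
    using A B i j by (simp add: mat_adj_def index_mult_mat_sum[OF A B j i] del: index_mult_mat(1))
  also have "\<dots> = (\<Sum>l<s. mat_adj B $$ (i,l) * mat_adj A $$ (l,j))"
    using A B i j by (auto simp: mat_adj_def mult.commute intro!: sum.cong)
  also have "\<dots> = (mat_adj B * mat_adj A) $$ (i,j)"
    by (rule index_mult_mat_sum[symmetric, OF mat_adj_carrier[OF B] mat_adj_carrier[OF A] i j])
  finally show "mat_adj (A * B) $$ (i,j) = (mat_adj B * mat_adj A) $$ (i,j)" .
qed (use A B in \<open>auto simp: mat_adj_def\<close>)

lemma mat_trace_adj: "M \<in> carrier_mat n n \<Longrightarrow> mat_trace (mat_adj M) = cnj (mat_trace M)"
  unfolding mat_trace_def mat_adj_def by auto

lemma cscalar_prod_sum: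
  "u \<in> carrier_vec d \<Longrightarrow> v \<in> carrier_vec d \<Longrightarrow> u \<bullet>c v = (\<Sum>i<d. u $ i * cnj (v $ i))"
  unfolding scalar_prod_def by (auto simp: atLeast0LessThan intro!: sum.cong)

lemma cscalar_prod_mat_adj:
  assumes A: "A \<in> carrier_mat r s" and v: "v \<in> carrier_vec s" and u: "u \<in> carrier_vec r"
  shows "(mat_adj A *\<^sub>v u) \<bullet>c v = u \<bullet>c (A *\<^sub>v v)"
proof -
  have "(mat_adj A *\<^sub>v u) \<bullet>c v = (\<Sum>l<s. (mat_adj A *\<^sub>v u) $ l * cnj (v $ l))"
    by (intro cscalar_prod_sum mult_mat_vec_carrier[OF mat_adj_carrier[OF A] u] v)
  also have "\<dots> = (\<Sum>l<s. (\<Sum>i<r. cnj (A $$ (i,l)) * u $ i) * cnj (v $ l))"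
    using A by (intro sum.cong refl, subst index_mult_mat_vec_sum[OF mat_adj_carrier[OF A] u])
      (auto simp: mat_adj_def intro!: sum.cong)
  also have "\<dots> = (\<Sum>i<r. u $ i * cnj (\<Sum>l<s. A $$ (i,l) * v $ l))"
    by (simp add: sum_distrib_left sum_distrib_right mult_ac sum.swap[of _ "{..<s}"])
  also have "\<dots> = (\<Sum>i<r. u $ i * cnj ((A *\<^sub>v v) $ i))"
    by (intro sum.cong refl, subst index_mult_mat_vec_sum[OF A v]) auto
  also have "\<dots> = u \<bullet>c (A *\<^sub>v v)"
    using A u v by (intro cscalar_prod_sum[symmetric]) auto
  finally show ?thesis .
qed

section \<open>Sums of matrices over a finite group\<close>

definition group_sum_mat :: "('g,'b) monoid_scheme \<Rightarrow> nat \<Rightarrow> nat \<Rightarrow> ('g \<Rightarrow> 'a :: semiring_0 mat) \<Rightarrow> 'a mat" where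
  "group_sum_mat G r c f = mat r c (\<lambda>(i,j). \<Sum>g\<in>carrier G. f g $$ (i,j))"

lemma group_sum_mat_carrier [simp]: "group_sum_mat G r c f \<in> carrier_mat r c"
  and group_sum_mat_dim [simp]: "dim_row (group_sum_mat G r c f) = r" "dim_col (group_sum_mat G r c f) = c"
  by (auto simp: group_sum_mat_def)

lemma group_sum_mat_index [simp]:
  "i < r \<Longrightarrow> j < c \<Longrightarrow> group_sum_mat G r c f $$ (i,j) = (\<Sum>g\<in>carrier G. f g $$ (i,j))"
  by (simp add: group_sum_mat_def)

lemma group_sum_mat_cong:
  "(\<And>g. g \<in> carrier G \<Longrightarrow> f g = f' g) \<Longrightarrow> group_sum_mat G r c f = group_sum_mat G r c f'"
  unfolding group_sum_mat_def by (intro cong_mat refl) (auto intro!: sum.cong)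

lemma group_sum_mat_reindex:
  assumes "bij_betw t (carrier G) (carrier G)"
  shows "group_sum_mat G r c f = group_sum_mat G r c (\<lambda>g. f (t g))"
  unfolding group_sum_mat_def
proof (intro cong_mat refl)
  fix i j
  show "(case (i,j) of (i,j) \<Rightarrow> \<Sum>g\<in>carrier G. f g $$ (i,j))
      = (case (i,j) of (i,j) \<Rightarrow> \<Sum>g\<in>carrier G. f (t g) $$ (i,j))"
    using sum.reindex_bij_betw[OF assms, of "\<lambda>g. f g $$ (i,j)"] by simp
qed

lemma group_sum_mat_mult_right:
  assumes f: "\<And>g. g \<in> carrier G \<Longrightarrow> f g \<in> carrier_mat r s" and B: "B \<in> carrier_mat s c"
  shows "group_sum_mat G r s f * B = group_sum_mat G r c (\<lambda>g. f g * B)"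
proof (rule eq_matI)
  fix i j assume "i < dim_row (group_sum_mat G r c (\<lambda>g. f g * B))" "j < dim_col (group_sum_mat G r c (\<lambda>g. f g * B))"
  hence i: "i < r" and j: "j < c" by auto
  have "(group_sum_mat G r s f * B) $$ (i,j) = (\<Sum>l<s. (\<Sum>g\<in>carrier G. f g $$ (i,l)) * B $$ (l,j))"
    using i by (subst index_mult_mat_sum[OF group_sum_mat_carrier B i j]) (auto intro!: sum.cong)
  also have "\<dots> = (\<Sum>g\<in>carrier G. \<Sum>l<s. f g $$ (i,l) * B $$ (l,j))"
    by (simp add: sum_distrib_right sum.swap[of _ "carrier G"])
  also have "\<dots> = group_sum_mat G r c (\<lambda>g. f g * B) $$ (i,j)"
    using i j f by (auto simp: index_mult_mat_sum[OF _ B i j] intro!: sum.cong)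
  finally show "(group_sum_mat G r s f * B) $$ (i,j) = group_sum_mat G r c (\<lambda>g. f g * B) $$ (i,j)" .
qed (use B in auto)

lemma group_sum_mat_mult_left:
  assumes f: "\<And>g. g \<in> carrier G \<Longrightarrow> f g \<in> carrier_mat s c" and B: "B \<in> carrier_mat r s"
  shows "B * group_sum_mat G s c f = group_sum_mat G r c (\<lambda>g. B * f g)"
proof (rule eq_matI)
  fix i j assume "i < dim_row (group_sum_mat G r c (\<lambda>g. B * f g))" "j < dim_col (group_sum_mat G r c (\<lambda>g. B * f g))"
  hence i: "i < r" and j: "j < c" by auto
  have "(B * group_sum_mat G s c f) $$ (i,j) = (\<Sum>l<s. B $$ (i,l) * (\<Sum>g\<in>carrier G. f g $$ (l,j)))"
    using j by (subst index_mult_mat_sum[OF B group_sum_mat_carrier i j]) (auto intro!: sum.cong)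
  also have "\<dots> = (\<Sum>g\<in>carrier G. \<Sum>l<s. B $$ (i,l) * f g $$ (l,j))"
    by (simp add: sum_distrib_left sum.swap[of _ "carrier G"])
  also have "\<dots> = group_sum_mat G r c (\<lambda>g. B * f g) $$ (i,j)"
    using i j f by (auto simp: index_mult_mat_sum[OF B _ i j] intro!: sum.cong)
  finally show "(B * group_sum_mat G s c f) $$ (i,j) = group_sum_mat G r c (\<lambda>g. B * f g) $$ (i,j)" .
qed (use B in auto)

lemma mat_trace_group_sum_mat:
  "(\<And>g. g \<in> carrier G \<Longrightarrow> dim_row (f g) = r) \<Longrightarrow>
   mat_trace (group_sum_mat G r r f) = (\<Sum>g\<in>carrier G. mat_trace (f g))"
  unfolding mat_trace_def by (simp add: sum.swap[of _ "{..<r}"])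

lemma group_sum_mat_cscalar_prod:
  fixes f :: "'g \<Rightarrow> complex mat"
  assumes f: "\<And>g. g \<in> carrier G \<Longrightarrow> f g \<in> carrier_mat d d" and v: "v \<in> carrier_vec d"
  shows "(group_sum_mat G d d f *\<^sub>v v) \<bullet>c v = (\<Sum>g\<in>carrier G. (f g *\<^sub>v v) \<bullet>c v)"
proof -
  have entry: "(group_sum_mat G d d f *\<^sub>v v) $ i = (\<Sum>g\<in>carrier G. (f g *\<^sub>v v) $ i)" if i: "i < d" for i
  proof -
    have "(group_sum_mat G d d f *\<^sub>v v) $ i = (\<Sum>l<d. (\<Sum>g\<in>carrier G. f g $$ (i,l)) * v $ l)"
      using i by (subst index_mult_mat_vec_sum[OF group_sum_mat_carrier v i]) (auto intro!: sum.cong)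
    also have "\<dots> = (\<Sum>g\<in>carrier G. (f g *\<^sub>v v) $ i)"
      using f by (simp add: index_mult_mat_vec_sum[OF _ v i] sum_distrib_right sum.swap[of _ "carrier G"]
          del: index_mult_mat_vec)
    finally show ?thesis .
  qed
  have "(group_sum_mat G d d f *\<^sub>v v) \<bullet>c v = (\<Sum>i<d. (group_sum_mat G d d f *\<^sub>v v) $ i * cnj (v $ i))"
    by (intro cscalar_prod_sum mult_mat_vec_carrier[OF group_sum_mat_carrier v] v)
  also have "\<dots> = (\<Sum>i<d. (\<Sum>g\<in>carrier G. (f g *\<^sub>v v) $ i) * cnj (v $ i))"
    by (intro sum.cong refl) (simp add: entry del: index_mult_mat_vec)
  also have "\<dots> = (\<Sum>g\<in>carrier G. \<Sum>i<d. (f g *\<^sub>v v) $ i * cnj (v $ i))"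
    by (simp add: sum_distrib_right sum.swap[of _ "carrier G"])
  also have "\<dots> = (\<Sum>g\<in>carrier G. (f g *\<^sub>v v) \<bullet>c v)"
    using f v by (intro sum.cong refl cscalar_prod_sum[symmetric] mult_mat_vec_carrier[OF f v]) auto
  finally show ?thesis .
qed

context group
begin

lemma inv_mult_cancel [simp]:
  "h \<in> carrier G \<Longrightarrow> x \<in> carrier G \<Longrightarrow> inv h \<otimes> (h \<otimes> x) = x"
  "h \<in> carrier G \<Longrightarrow> x \<in> carrier G \<Longrightarrow> h \<otimes> (inv h \<otimes> x) = x"
  "h \<in> carrier G \<Longrightarrow> x \<in> carrier G \<Longrightarrow> x \<otimes> h \<otimes> inv h = x"
  "h \<in> carrier G \<Longrightarrow> x \<in> carrier G \<Longrightarrow> x \<otimes> inv h \<otimes> h = x"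
  by (metis inv_closed l_inv l_one m_assoc r_inv r_one)+

lemma bij_betw_mult_left: "h \<in> carrier G \<Longrightarrow> bij_betw (\<lambda>g. h \<otimes> g) (carrier G) (carrier G)"
  by (rule bij_betwI[where g = "\<lambda>g. inv h \<otimes> g"]) auto

lemma bij_betw_mult_right: "h \<in> carrier G \<Longrightarrow> bij_betw (\<lambda>g. g \<otimes> h) (carrier G) (carrier G)"
  by (rule bij_betwI[where g = "\<lambda>g. g \<otimes> inv h"]) (auto simp: m_assoc)

lemma bij_betw_inv: "bij_betw (\<lambda>g. inv g) (carrier G) (carrier G)"
  by (rule bij_betwI[where g = "\<lambda>g. inv g"]) auto

lemma bij_betw_conj: "h \<in> carrier G \<Longrightarrow> bij_betw (\<lambda>g. h \<otimes> g \<otimes> inv h) (carrier G) (carrier G)"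
  by (rule bij_betwI[where g = "\<lambda>g. inv h \<otimes> g \<otimes> h"]) (auto simp: m_assoc)

end

locale finite_group = group G for G :: "('g,'b) monoid_scheme" (structure) +
  assumes finite_carrier: "finite (carrier G)"
begin

lemma order_pos: "order G > 0"
  unfolding Coset.order_def using finite_carrier by (auto simp: card_gt_0_iff)

end

section \<open>Representations and Schur's lemma\<close>

lemma is_rep_carrier: "is_rep G \<rho> d \<Longrightarrow> g \<in> carrier G \<Longrightarrow> \<rho> g \<in> carrier_mat d d"
  and is_rep_one: "is_rep G \<rho> d \<Longrightarrow> \<rho> \<one>\<^bsub>G\<^esub> = 1\<^sub>m d"
  and is_rep_mult: "is_rep G \<rho> d \<Longrightarrow> g \<in> carrier G \<Longrightarrow> h \<in> carrier G \<Longrightarrow> \<rho> (g \<otimes>\<^bsub>G\<^esub> h) = \<rho> g * \<rho> h"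
  unfolding is_rep_def by auto

lemma irreducible_rep_is_rep: "irreducible_rep G \<rho> d \<Longrightarrow> is_rep G \<rho> d"
  and irreducible_rep_dim_pos: "irreducible_rep G \<rho> d \<Longrightarrow> d > 0"
  and irreducible_rep_invariant: "irreducible_rep G \<rho> d \<Longrightarrow> invariant_subspace G \<rho> d W \<Longrightarrow>
    W = {0\<^sub>v d} \<or> W = carrier_vec d"
  unfolding irreducible_rep_def by auto

lemma (in group) is_rep_inv:
  assumes "is_rep G \<rho> d" "g \<in> carrier G"
  shows "\<rho> (inv g) * \<rho> g = 1\<^sub>m d" "\<rho> g * \<rho> (inv g) = 1\<^sub>m d"
  using is_rep_mult[OF assms(1), of "inv g" g] is_rep_mult[OF assms(1), of g "inv g"] is_rep_one[OF assms(1)] assms(2)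
  by auto

lemma intertwiner_kernel_invariant:
  assumes \<rho>: "is_rep G \<rho> d" and \<sigma>: "is_rep G \<sigma> e" and A: "A \<in> carrier_mat e d"
    and comm: "\<And>g. g \<in> carrier G \<Longrightarrow> A * \<rho> g = \<sigma> g * A"
  shows "invariant_subspace G \<rho> d {v \<in> carrier_vec d. A *\<^sub>v v = 0\<^sub>v e}"
  unfolding invariant_subspace_def
proof (intro conjI ballI allI)
  fix g v assume g: "g \<in> carrier G" and v: "v \<in> {v \<in> carrier_vec d. A *\<^sub>v v = 0\<^sub>v e}"
  note \<rho>g = is_rep_carrier[OF \<rho> g] and \<sigma>g = is_rep_carrier[OF \<sigma> g]
  have "A *\<^sub>v (\<rho> g *\<^sub>v v) = (\<sigma> g * A) *\<^sub>v v"
    using A \<rho>g v by (simp flip: comm[OF g])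
  also have "\<dots> = 0\<^sub>v e" using A \<sigma>g v by auto
  finally show "\<rho> g *\<^sub>v v \<in> {v \<in> carrier_vec d. A *\<^sub>v v = 0\<^sub>v e}" using \<rho>g v by simp
qed (use A in \<open>auto simp: mult_add_distrib_mat_vec[OF A] mult_mat_vec[OF A]\<close>)

lemma intertwiner_image_invariant:
  assumes \<rho>: "is_rep G \<rho> d" and \<sigma>: "is_rep G \<sigma> e" and A: "A \<in> carrier_mat e d"
    and comm: "\<And>g. g \<in> carrier G \<Longrightarrow> A * \<rho> g = \<sigma> g * A"
  shows "invariant_subspace G \<sigma> e {A *\<^sub>v v | v. v \<in> carrier_vec d}"
  unfolding invariant_subspace_def
proof (intro conjI ballI allI)
  show "0\<^sub>v e \<in> {A *\<^sub>v v | v. v \<in> carrier_vec d}"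
    using A by (auto intro!: exI[of _ "0\<^sub>v d"])
next
  fix u u' assume "u \<in> {A *\<^sub>v v | v. v \<in> carrier_vec d}" "u' \<in> {A *\<^sub>v v | v. v \<in> carrier_vec d}"
  then obtain v v' where "v \<in> carrier_vec d" "v' \<in> carrier_vec d" "u = A *\<^sub>v v" "u' = A *\<^sub>v v'" by auto
  thus "u + u' \<in> {A *\<^sub>v v | v. v \<in> carrier_vec d}"
    by (auto simp: mult_add_distrib_mat_vec[OF A] intro!: exI[of _ "v + v'"])
next
  fix c u assume "u \<in> {A *\<^sub>v v | v. v \<in> carrier_vec d}"
  then obtain v where "v \<in> carrier_vec d" "u = A *\<^sub>v v" by auto
  thus "c \<cdot>\<^sub>v u \<in> {A *\<^sub>v v | v. v \<in> carrier_vec d}"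
    by (auto simp: mult_mat_vec[OF A] intro!: exI[of _ "c \<cdot>\<^sub>v v"])
next
  fix g u assume g: "g \<in> carrier G" and "u \<in> {A *\<^sub>v v | v. v \<in> carrier_vec d}"
  then obtain v where v: "v \<in> carrier_vec d" "u = A *\<^sub>v v" by auto
  note \<rho>g = is_rep_carrier[OF \<rho> g] and \<sigma>g = is_rep_carrier[OF \<sigma> g]
  have "\<sigma> g *\<^sub>v u = A *\<^sub>v (\<rho> g *\<^sub>v v)"
    using A \<rho>g \<sigma>g v by (simp flip: assoc_mult_mat_vec add: comm[OF g])
  thus "\<sigma> g *\<^sub>v u \<in> {A *\<^sub>v v | v. v \<in> carrier_vec d}" using \<rho>g v by auto
qed (use A in auto)

lemma schur_lemma_scalar:
  assumes irr: "irreducible_rep G \<rho> d" and A: "A \<in> carrier_mat d d"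
    and comm: "\<And>g. g \<in> carrier G \<Longrightarrow> A * \<rho> g = \<rho> g * A"
  obtains c where "A = c \<cdot>\<^sub>m 1\<^sub>m d"
proof -
  note rep = irreducible_rep_is_rep[OF irr]
  obtain c where "eigenvalue A c"
    using spectrum_non_empty[OF A irreducible_rep_dim_pos[OF irr]] unfolding spectrum_def by auto
  then obtain v where v: "v \<in> carrier_vec d" "v \<noteq> 0\<^sub>v d" "A *\<^sub>v v = c \<cdot>\<^sub>v v"
    unfolding eigenvalue_def eigenvector_def using A by auto
  define B where "B = A - c \<cdot>\<^sub>m 1\<^sub>m d"
  have B: "B \<in> carrier_mat d d" unfolding B_def by (rule minus_carrier_mat) simp
  have B_kernel: "B *\<^sub>v u = 0\<^sub>v d \<longleftrightarrow> A *\<^sub>v u = c \<cdot>\<^sub>v u" if u: "u \<in> carrier_vec d" for u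
  proof -
    have "B *\<^sub>v u = A *\<^sub>v u - c \<cdot>\<^sub>v u"
      unfolding B_def minus_mult_distrib_mat_vec[OF A smult_carrier_mat[OF one_carrier_mat] u]
      using u by (simp add: smult_one_mat_mult_vec)
    thus ?thesis using A u by (simp add: minus_eq_zero_vec_iff)
  qed
  have "B * \<rho> g = \<rho> g * B" if g: "g \<in> carrier G" for g
    unfolding B_def by (rule minus_smult_one_mat_commute[OF A is_rep_carrier[OF rep g] comm[OF g]])
  hence "invariant_subspace G \<rho> d {u \<in> carrier_vec d. B *\<^sub>v u = 0\<^sub>v d}"
    by (rule intertwiner_kernel_invariant[OF rep rep B])
  moreover have "v \<in> {u \<in> carrier_vec d. B *\<^sub>v u = 0\<^sub>v d}" using v B_kernel by simp
  ultimately have kernel: "{u \<in> carrier_vec d. B *\<^sub>v u = 0\<^sub>v d} = carrier_vec d"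
    using irreducible_rep_invariant[OF irr] v(2) by blast
  have "A *\<^sub>v unit_vec d j = (c \<cdot>\<^sub>m 1\<^sub>m d) *\<^sub>v unit_vec d j" if j: "j < d" for j
  proof -
    have "unit_vec d j \<in> {u \<in> carrier_vec d. B *\<^sub>v u = 0\<^sub>v d}" unfolding kernel using j by simp
    thus ?thesis using B_kernel[of "unit_vec d j"] by (simp add: smult_one_mat_mult_vec)
  qed
  hence "A = c \<cdot>\<^sub>m 1\<^sub>m d" by (intro mat_eq_by_unit_vecs[OF A]) simp_all
  with that show thesis .
qed

lemma nonzero_intertwiner_injective:
  assumes irr: "irreducible_rep G \<rho> d" and \<sigma>: "is_rep G \<sigma> e"
    and A: "A \<in> carrier_mat e d" and comm: "\<And>g. g \<in> carrier G \<Longrightarrow> A * \<rho> g = \<sigma> g * A"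
    and nonzero: "A \<noteq> 0\<^sub>m e d" and v: "v \<in> carrier_vec d" "A *\<^sub>v v = 0\<^sub>v e"
  shows "v = 0\<^sub>v d"
proof -
  define K where "K = {v \<in> carrier_vec d. A *\<^sub>v v = 0\<^sub>v e}"
  have "K \<noteq> carrier_vec d"
  proof
    assume kernel: "K = carrier_vec d"
    have "A = 0\<^sub>m e d"
    proof (rule mat_eq_by_unit_vecs[OF A zero_carrier_mat])
      fix j assume "j < d"
      hence "unit_vec d j \<in> K" unfolding kernel by simp
      thus "A *\<^sub>v unit_vec d j = 0\<^sub>m e d *\<^sub>v unit_vec d j" by (simp add: K_def)
    qed
    with nonzero show False ..
  qed
  moreover have "invariant_subspace G \<rho> d K"
    unfolding K_def by (intro intertwiner_kernel_invariant[OF irreducible_rep_is_rep[OF irr] \<sigma> A] comm)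
  ultimately have "K = {0\<^sub>v d}" using irreducible_rep_invariant[OF irr, of K] by simp
  moreover have "v \<in> K" using v by (simp add: K_def)
  ultimately show ?thesis by simp
qed

lemma nonzero_intertwiner_surjective:
  assumes \<rho>: "is_rep G \<rho> d" and irr: "irreducible_rep G \<sigma> e"
    and A: "A \<in> carrier_mat e d" and comm: "\<And>g. g \<in> carrier G \<Longrightarrow> A * \<rho> g = \<sigma> g * A"
    and nonzero: "A \<noteq> 0\<^sub>m e d" and u: "u \<in> carrier_vec e"
  shows "\<exists>v\<in>carrier_vec d. A *\<^sub>v v = u"
proof -
  define I where "I = {A *\<^sub>v v | v. v \<in> carrier_vec d}"
  have "I \<noteq> {0\<^sub>v e}"
  proof
    assume image: "I = {0\<^sub>v e}"
    have "A = 0\<^sub>m e d"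
    proof (rule mat_eq_by_unit_vecs[OF A zero_carrier_mat])
      fix j assume "j < d"
      have "A *\<^sub>v unit_vec d j \<in> I" unfolding I_def by (intro CollectI exI[of _ "unit_vec d j"]) simp
      thus "A *\<^sub>v unit_vec d j = 0\<^sub>m e d *\<^sub>v unit_vec d j" unfolding image by simp
    qed
    with nonzero show False ..
  qed
  moreover have "invariant_subspace G \<sigma> e I"
    unfolding I_def by (intro intertwiner_image_invariant[OF \<rho> irreducible_rep_is_rep[OF irr] A] comm)
  ultimately have "I = carrier_vec e" using irreducible_rep_invariant[OF irr, of I] by simp
  hence "u \<in> I" using u by simp
  thus ?thesis unfolding I_def by auto
qed

lemma schur_lemma_iso:
  fixes A :: "complex mat"
  assumes irr\<rho>: "irreducible_rep G \<rho> d" and irr\<sigma>: "irreducible_rep G \<sigma> e"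
    and A: "A \<in> carrier_mat e d" and comm: "\<And>g. g \<in> carrier G \<Longrightarrow> A * \<rho> g = \<sigma> g * A"
    and nonzero: "A \<noteq> 0\<^sub>m e d"
  shows "iso_rep G \<rho> d \<sigma> e"
proof -
  note \<rho> = irreducible_rep_is_rep[OF irr\<rho>] and \<sigma> = irreducible_rep_is_rep[OF irr\<sigma>]
  have inj: "v = 0\<^sub>v d" if "v \<in> carrier_vec d" "A *\<^sub>v v = 0\<^sub>v e" for v
    using nonzero_intertwiner_injective[OF irr\<rho> \<sigma> A _ nonzero that] comm by blast
  have surj: "\<exists>v\<in>carrier_vec d. A *\<^sub>v v = u" if "u \<in> carrier_vec e" for u
    using nonzero_intertwiner_surjective[OF \<rho> irr\<sigma> A _ nonzero that] comm by blast
  have de: "d = e" by (rule bijective_mat_dims_eq[OF A inj surj])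
  have Ad: "A \<in> carrier_mat d d" using A de by simp
  have "det A \<noteq> 0" unfolding det_0_iff_vec_prod_zero[OF Ad] using inj de by auto
  hence "invertible_mat A" by (rule invertible_mat_if_det_nonzero[OF Ad])
  thus ?thesis unfolding iso_rep_def using de Ad comm by auto
qed

section \<open>Class functions and Fourier transforms\<close>

definition class_fun :: "('g,'b) monoid_scheme \<Rightarrow> ('g \<Rightarrow> 'c) \<Rightarrow> bool" where
  "class_fun G F \<longleftrightarrow> (\<forall>g\<in>carrier G. \<forall>h\<in>carrier G. F (h \<otimes>\<^bsub>G\<^esub> g \<otimes>\<^bsub>G\<^esub> inv\<^bsub>G\<^esub> h) = F g)"

definition fourier_mat :: "('g,'b) monoid_scheme \<Rightarrow> ('g \<Rightarrow> real) \<Rightarrow> ('g \<Rightarrow> complex mat) \<Rightarrow> nat \<Rightarrow> complex mat" where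
  "fourier_mat G F \<rho> d = group_sum_mat G d d (\<lambda>g. complex_of_real (F g) \<cdot>\<^sub>m \<rho> g)"

definition fourier_scalar :: "('g,'b) monoid_scheme \<Rightarrow> ('g \<Rightarrow> real) \<Rightarrow> ('g \<Rightarrow> complex mat) \<Rightarrow> nat \<Rightarrow> complex" where
  "fourier_scalar G F \<rho> d = (\<Sum>g\<in>carrier G. complex_of_real (F g) * character \<rho> d g) / of_nat d"

lemma fourier_mat_carrier [simp]: "fourier_mat G F \<rho> d \<in> carrier_mat d d"
  and fourier_mat_dim [simp]: "dim_row (fourier_mat G F \<rho> d) = d" "dim_col (fourier_mat G F \<rho> d) = d"
  unfolding fourier_mat_def by simp_all

lemma character_mat_trace: "is_rep G \<rho> d \<Longrightarrow> g \<in> carrier G \<Longrightarrow> character \<rho> d g = mat_trace (\<rho> g)"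
  using is_rep_carrier[of G \<rho> d g] unfolding mat_trace_def character_def by auto

lemma fourier_mat_intertwine:
  assumes P: "P \<in> carrier_mat n m"
    and \<rho>: "\<And>g. g \<in> carrier G \<Longrightarrow> \<rho> g \<in> carrier_mat m m" and \<sigma>: "\<And>g. g \<in> carrier G \<Longrightarrow> \<sigma> g \<in> carrier_mat n n"
    and comm: "\<And>g. g \<in> carrier G \<Longrightarrow> P * \<rho> g = \<sigma> g * P"
  shows "P * fourier_mat G F \<rho> m = fourier_mat G F \<sigma> n * P"
proof -
  have "P * fourier_mat G F \<rho> m = group_sum_mat G n m (\<lambda>g. P * (complex_of_real (F g) \<cdot>\<^sub>m \<rho> g))"
    unfolding fourier_mat_def using \<rho> by (intro group_sum_mat_mult_left[OF _ P]) auto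
  also have "\<dots> = group_sum_mat G n m (\<lambda>g. (complex_of_real (F g) \<cdot>\<^sub>m \<sigma> g) * P)"
    using comm by (intro group_sum_mat_cong) (simp add: mult_smult_distrib[OF P \<rho>] mult_smult_assoc_mat[OF \<sigma> P])
  also have "\<dots> = fourier_mat G F \<sigma> n * P"
    unfolding fourier_mat_def using \<sigma> by (intro group_sum_mat_mult_right[symmetric, OF _ P]) auto
  finally show ?thesis .
qed

context group
begin

lemma class_fun_conv:
  assumes P: "class_fun G P" and R: "class_fun G R"
  shows "class_fun G (conv G P R)"
  unfolding class_fun_def
proof (intro ballI)
  fix g h assume g: "g \<in> carrier G" and h: "h \<in> carrier G"
  have "conv G P R (h \<otimes> g \<otimes> inv h)
      = (\<Sum>v\<in>carrier G. P ((h \<otimes> g \<otimes> inv h) \<otimes> inv (h \<otimes> v \<otimes> inv h)) * R (h \<otimes> v \<otimes> inv h))"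
    unfolding conv_def by (rule sum.reindex_bij_betw[OF bij_betw_conj[OF h], symmetric])
  also have "\<dots> = conv G P R g"
    unfolding conv_def
  proof (rule sum.cong[OF refl])
    fix v assume v: "v \<in> carrier G"
    have "(h \<otimes> g \<otimes> inv h) \<otimes> inv (h \<otimes> v \<otimes> inv h) = h \<otimes> (g \<otimes> inv v) \<otimes> inv h"
      using g h v by (simp add: inv_mult_group m_assoc)
    thus "P ((h \<otimes> g \<otimes> inv h) \<otimes> inv (h \<otimes> v \<otimes> inv h)) * R (h \<otimes> v \<otimes> inv h) = P (g \<otimes> inv v) * R v"
      using P R g h v unfolding class_fun_def by simp
  qed
  finally show "conv G P R (h \<otimes> g \<otimes> inv h) = conv G P R g" .
qed

lemma class_fun_delta_one: "class_fun G (delta_one G)"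
  unfolding class_fun_def delta_one_def
proof (intro ballI)
  fix g h assume g: "g \<in> carrier G" and h: "h \<in> carrier G"
  have "h \<otimes> g \<otimes> inv h = \<one> \<longleftrightarrow> g = \<one>"
  proof
    assume "h \<otimes> g \<otimes> inv h = \<one>"
    hence "inv h \<otimes> (h \<otimes> g \<otimes> inv h) \<otimes> h = inv h \<otimes> \<one> \<otimes> h" by simp
    thus "g = \<one>" using g h by (simp add: m_assoc)
  qed (use h in simp)
  thus "(if h \<otimes> g \<otimes> inv h = \<one> then 1 else 0) = (if g = \<one> then 1 else (0::real))" by simp
qed

lemma class_fun_conv_word: "(\<And>i. i \<in> set w \<Longrightarrow> class_fun G (Q i)) \<Longrightarrow> class_fun G (conv_word G Q w)"
  by (induction w) (auto simp: conv_word_def class_fun_delta_one class_fun_conv)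

lemma class_fun_inv: "class_fun G F \<Longrightarrow> class_fun G (\<lambda>g. F (inv g))"
  unfolding class_fun_def by (simp add: inv_mult_group m_assoc)

lemma sum_conv: "(\<Sum>h\<in>carrier G. conv G P R h) = (\<Sum>g\<in>carrier G. P g) * (\<Sum>g\<in>carrier G. R g)"
proof -
  have "(\<Sum>h\<in>carrier G. conv G P R h) = (\<Sum>g\<in>carrier G. (\<Sum>h\<in>carrier G. P (h \<otimes> inv g)) * R g)"
    unfolding conv_def by (subst sum.swap) (simp add: sum_distrib_right)
  also have "\<dots> = (\<Sum>g\<in>carrier G. (\<Sum>h\<in>carrier G. P h) * R g)"
    using sum.reindex_bij_betw[OF bij_betw_mult_right[OF inv_closed], of _ P] by simp
  finally show ?thesis by (simp add: sum_distrib_left)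
qed

end

context finite_group
begin

lemma fourier_mat_class_fun:
  assumes irr: "irreducible_rep G \<rho> d" and F: "class_fun G F"
  shows "fourier_mat G F \<rho> d = fourier_scalar G F \<rho> d \<cdot>\<^sub>m 1\<^sub>m d"
proof -
  note rep = irreducible_rep_is_rep[OF irr]
  note \<rho> = is_rep_carrier[OF rep]
  let ?S = "fourier_mat G F \<rho> d"
  have "?S * \<rho> h = \<rho> h * ?S" if h: "h \<in> carrier G" for h
  proof -
    have "?S * \<rho> h = group_sum_mat G d d (\<lambda>g. complex_of_real (F g) \<cdot>\<^sub>m \<rho> g * \<rho> h)"
      unfolding fourier_mat_def using \<rho> h by (intro group_sum_mat_mult_right) auto
    also have "\<dots> = group_sum_mat G d d (\<lambda>g. complex_of_real (F g) \<cdot>\<^sub>m \<rho> (g \<otimes> h))"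
      using h by (intro group_sum_mat_cong) (simp add: is_rep_mult[OF rep] mult_smult_assoc_mat[OF \<rho> \<rho>])
    also have "\<dots> = group_sum_mat G d d (\<lambda>u. complex_of_real (F (h \<otimes> u \<otimes> inv h)) \<cdot>\<^sub>m \<rho> (h \<otimes> u \<otimes> inv h \<otimes> h))"
      by (rule group_sum_mat_reindex[OF bij_betw_conj[OF h]])
    also have "\<dots> = group_sum_mat G d d (\<lambda>u. complex_of_real (F u) \<cdot>\<^sub>m \<rho> (h \<otimes> u))"
      using F h unfolding class_fun_def by (intro group_sum_mat_cong) simp
    also have "\<dots> = group_sum_mat G d d (\<lambda>g. \<rho> h * (complex_of_real (F g) \<cdot>\<^sub>m \<rho> g))"
      using h by (intro group_sum_mat_cong) (simp add: is_rep_mult[OF rep] mult_smult_distrib[OF \<rho> \<rho>])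
    also have "\<dots> = \<rho> h * ?S"
      unfolding fourier_mat_def using \<rho> h by (intro group_sum_mat_mult_left[symmetric]) auto
    finally show ?thesis .
  qed
  then obtain c where c: "?S = c \<cdot>\<^sub>m 1\<^sub>m d"
    using schur_lemma_scalar[OF irr fourier_mat_carrier] by blast
  have "c * of_nat d = mat_trace ?S" by (simp add: c mat_trace_smult_one)
  also have "\<dots> = (\<Sum>g\<in>carrier G. complex_of_real (F g) * character \<rho> d g)"
    unfolding fourier_mat_def using \<rho>
    by (subst mat_trace_group_sum_mat) (auto intro!: sum.cong simp: mat_trace_smult[OF \<rho>] character_mat_trace[OF rep])
  finally have "c = fourier_scalar G F \<rho> d"
    unfolding fourier_scalar_def using irreducible_rep_dim_pos[OF irr] by (simp add: field_simps)
  with c show ?thesis by simp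
qed

lemma fourier_mat_conv:
  assumes rep: "is_rep G \<rho> d"
  shows "fourier_mat G (conv G P R) \<rho> d = fourier_mat G P \<rho> d * fourier_mat G R \<rho> d"
proof (rule eq_matI)
  note \<rho> = is_rep_carrier[OF rep]
  fix i j assume "i < dim_row (fourier_mat G P \<rho> d * fourier_mat G R \<rho> d)"
    "j < dim_col (fourier_mat G P \<rho> d * fourier_mat G R \<rho> d)"
  hence i: "i < d" and j: "j < d" by auto
  have "(fourier_mat G P \<rho> d * fourier_mat G R \<rho> d) $$ (i,j)
     = (\<Sum>l<d. (\<Sum>g\<in>carrier G. of_real (P g) * \<rho> g $$ (i,l)) * (\<Sum>h\<in>carrier G. of_real (R h) * \<rho> h $$ (l,j)))"
    unfolding fourier_mat_def using i j
    by (subst index_mult_mat_sum[OF group_sum_mat_carrier group_sum_mat_carrier i j])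
      (auto simp: carrier_matD[OF \<rho>] intro!: sum.cong)
  also have "\<dots> = (\<Sum>l<d. \<Sum>g\<in>carrier G. \<Sum>h\<in>carrier G. of_real (P g) * of_real (R h) * (\<rho> g $$ (i,l) * \<rho> h $$ (l,j)))"
    by (simp add: sum_product mult_ac)
  also have "\<dots> = (\<Sum>g\<in>carrier G. \<Sum>h\<in>carrier G. \<Sum>l<d. of_real (P g) * of_real (R h) * (\<rho> g $$ (i,l) * \<rho> h $$ (l,j)))"
    by (subst sum.swap) (intro sum.cong refl sum.swap)
  also have "\<dots> = (\<Sum>h\<in>carrier G. \<Sum>g\<in>carrier G. of_real (P g) * of_real (R h) * (\<Sum>l<d. \<rho> g $$ (i,l) * \<rho> h $$ (l,j)))"
    by (subst sum.swap) (simp add: sum_distrib_left)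
  also have "\<dots> = (\<Sum>h\<in>carrier G. \<Sum>g\<in>carrier G. of_real (P g) * of_real (R h) * \<rho> (g \<otimes> h) $$ (i,j))"
    using i j by (intro sum.cong refl) (simp add: is_rep_mult[OF rep] index_mult_mat_sum[OF \<rho> \<rho> i j])
  also have "\<dots> = (\<Sum>h\<in>carrier G. \<Sum>u\<in>carrier G. of_real (P (u \<otimes> inv h)) * of_real (R h) * \<rho> u $$ (i,j))"
  proof (rule sum.cong[OF refl])
    fix h assume h: "h \<in> carrier G"
    show "(\<Sum>g\<in>carrier G. of_real (P g) * of_real (R h) * \<rho> (g \<otimes> h) $$ (i,j))
        = (\<Sum>u\<in>carrier G. of_real (P (u \<otimes> inv h)) * of_real (R h) * \<rho> u $$ (i,j))"
      using h by (subst sum.reindex_bij_betw[OF bij_betw_mult_right[OF inv_closed[OF h]], symmetric])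
        (auto intro!: sum.cong)
  qed
  also have "\<dots> = (\<Sum>u\<in>carrier G. (\<Sum>h\<in>carrier G. of_real (P (u \<otimes> inv h)) * of_real (R h)) * \<rho> u $$ (i,j))"
    by (subst sum.swap) (simp add: sum_distrib_right)
  also have "\<dots> = fourier_mat G (conv G P R) \<rho> d $$ (i,j)"
    unfolding conv_def fourier_mat_def using i j by (auto simp: carrier_matD[OF \<rho>] intro!: sum.cong)
  finally show "fourier_mat G (conv G P R) \<rho> d $$ (i,j) = (fourier_mat G P \<rho> d * fourier_mat G R \<rho> d) $$ (i,j)" ..
qed auto

lemma fourier_mat_delta_one:
  assumes rep: "is_rep G \<rho> d"
  shows "fourier_mat G (delta_one G) \<rho> d = 1\<^sub>m d"
proof (rule eq_matI)
  fix i j assume "i < dim_row (1\<^sub>m d :: complex mat)" "j < dim_col (1\<^sub>m d :: complex mat)"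
  hence i: "i < d" and j: "j < d" by auto
  have "fourier_mat G (delta_one G) \<rho> d $$ (i,j) = (\<Sum>g\<in>carrier G. if g = \<one> then \<rho> g $$ (i,j) else 0)"
    unfolding fourier_mat_def using i j
    by (auto simp: delta_one_def carrier_matD[OF is_rep_carrier[OF rep]] intro!: sum.cong)
  also have "\<dots> = 1\<^sub>m d $$ (i,j)" using finite_carrier i j by (simp add: is_rep_one[OF rep])
  finally show "fourier_mat G (delta_one G) \<rho> d $$ (i,j) = 1\<^sub>m d $$ (i,j)" .
qed auto

lemma fourier_scalar_conv_word:
  assumes irr: "irreducible_rep G \<rho> d" and Q: "\<And>i. i \<in> set w \<Longrightarrow> class_fun G (Q i)"
  shows "fourier_scalar G (conv_word G Q w) \<rho> d = (\<Prod>i<length w. fourier_scalar G (Q (w ! i)) \<rho> d)"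
proof -
  note rep = irreducible_rep_is_rep[OF irr]
  have "fourier_mat G (conv_word G Q w) \<rho> d = (\<Prod>i<length w. fourier_scalar G (Q (w ! i)) \<rho> d) \<cdot>\<^sub>m 1\<^sub>m d"
    using Q
  proof (induction w)
    case Nil
    have "1 \<cdot>\<^sub>m 1\<^sub>m d = (1\<^sub>m d :: complex mat)" by (intro eq_matI) auto
    thus ?case by (simp add: conv_word_def fourier_mat_delta_one[OF rep])
  next
    case (Cons i w)
    have "fourier_mat G (conv_word G Q (i # w)) \<rho> d = fourier_mat G (Q i) \<rho> d * fourier_mat G (conv_word G Q w) \<rho> d"
      by (simp add: conv_word_def fourier_mat_conv[OF rep])
    also have "\<dots> = (fourier_scalar G (Q i) \<rho> d * (\<Prod>i<length w. fourier_scalar G (Q (w ! i)) \<rho> d)) \<cdot>\<^sub>m 1\<^sub>m d"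
      using Cons by (simp add: fourier_mat_class_fun[OF irr] smult_one_mat_mult)
    also have "\<dots> = (\<Prod>j<length (i # w). fourier_scalar G (Q ((i # w) ! j)) \<rho> d) \<cdot>\<^sub>m 1\<^sub>m d"
      by (simp only: length_Cons prod.lessThan_Suc_shift nth_Cons_0 nth_Cons_Suc)
    finally show ?case .
  qed
  moreover have "fourier_mat G (conv_word G Q w) \<rho> d = fourier_scalar G (conv_word G Q w) \<rho> d \<cdot>\<^sub>m 1\<^sub>m d"
    by (rule fourier_mat_class_fun[OF irr class_fun_conv_word[OF Q]])
  ultimately have "fourier_scalar G (conv_word G Q w) \<rho> d \<cdot>\<^sub>m 1\<^sub>m d
      = (\<Prod>i<length w. fourier_scalar G (Q (w ! i)) \<rho> d) \<cdot>\<^sub>m 1\<^sub>m d" by simp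
  thus ?thesis by (rule smult_one_mat_cancel[OF _ irreducible_rep_dim_pos[OF irr]])
qed

lemma sum_conv_word:
  "(\<And>i. i \<in> set w \<Longrightarrow> (\<Sum>g\<in>carrier G. Q i g) = 1) \<Longrightarrow> (\<Sum>g\<in>carrier G. conv_word G Q w g) = 1"
proof (induction w)
  case Nil
  show ?case using finite_carrier by (simp add: conv_word_def delta_one_def)
next
  case (Cons i w)
  thus ?case by (simp add: conv_word_def sum_conv)
qed

end

section \<open>Characters\<close>

(* Weyl's unitary trick: averaging the standard Hermitian form over G gives an invariant one. *)
definition averaged_form :: "('g,'b) monoid_scheme \<Rightarrow> ('g \<Rightarrow> complex mat) \<Rightarrow> nat \<Rightarrow> complex mat" where
  "averaged_form G \<rho> d = group_sum_mat G d d (\<lambda>g. mat_adj (\<rho> g) * \<rho> g)"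

lemma averaged_form_carrier: "averaged_form G \<rho> d \<in> carrier_mat d d"
  unfolding averaged_form_def by simp

context finite_group
begin

lemma averaged_intertwiner:
  assumes \<rho>: "is_rep G \<rho> d" and \<sigma>: "is_rep G \<sigma> e" and B: "B \<in> carrier_mat e d" and h: "h \<in> carrier G"
  shows "group_sum_mat G e d (\<lambda>g. \<sigma> g * B * \<rho> (inv g)) * \<rho> h = \<sigma> h * group_sum_mat G e d (\<lambda>g. \<sigma> g * B * \<rho> (inv g))"
proof -
  note \<rho>c = is_rep_carrier[OF \<rho>] and \<sigma>c = is_rep_carrier[OF \<sigma>]
  have sandwich: "\<sigma> g * B * \<rho> (inv g) \<in> carrier_mat e d" if g: "g \<in> carrier G" for g
    by (rule mult_carrier_mat[OF mult_carrier_mat[OF \<sigma>c[OF g] B] \<rho>c[OF inv_closed[OF g]]])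
  have "group_sum_mat G e d (\<lambda>g. \<sigma> g * B * \<rho> (inv g)) * \<rho> h = group_sum_mat G e d (\<lambda>g. \<sigma> g * B * \<rho> (inv g) * \<rho> h)"
    by (rule group_sum_mat_mult_right[OF sandwich \<rho>c[OF h]])
  also have "\<dots> = group_sum_mat G e d (\<lambda>g. \<sigma> g * B * \<rho> (inv g \<otimes> h))"
  proof (rule group_sum_mat_cong)
    fix g assume g: "g \<in> carrier G"
    show "\<sigma> g * B * \<rho> (inv g) * \<rho> h = \<sigma> g * B * \<rho> (inv g \<otimes> h)"
      using assoc_mult_mat[OF mult_carrier_mat[OF \<sigma>c[OF g] B] \<rho>c[OF inv_closed[OF g]] \<rho>c[OF h]]
      by (simp add: is_rep_mult[OF \<rho> inv_closed[OF g] h])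
  qed
  also have "\<dots> = group_sum_mat G e d (\<lambda>g. \<sigma> (h \<otimes> g) * B * \<rho> (inv (h \<otimes> g) \<otimes> h))"
    by (rule group_sum_mat_reindex[OF bij_betw_mult_left[OF h]])
  also have "\<dots> = group_sum_mat G e d (\<lambda>g. \<sigma> h * (\<sigma> g * B * \<rho> (inv g)))"
  proof (rule group_sum_mat_cong)
    fix g assume g: "g \<in> carrier G"
    have "inv (h \<otimes> g) \<otimes> h = inv g" using g h by (simp add: inv_mult_group m_assoc)
    thus "\<sigma> (h \<otimes> g) * B * \<rho> (inv (h \<otimes> g) \<otimes> h) = \<sigma> h * (\<sigma> g * B * \<rho> (inv g))"
      using assoc_mult_mat[OF \<sigma>c[OF h] \<sigma>c[OF g] B]
        assoc_mult_mat[OF \<sigma>c[OF h] mult_carrier_mat[OF \<sigma>c[OF g] B] \<rho>c[OF inv_closed[OF g]]]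
        assoc_mult_mat[OF \<sigma>c[OF g] B \<rho>c[OF inv_closed[OF g]]] g h
      by (simp add: is_rep_mult[OF \<sigma>])
  qed
  also have "\<dots> = \<sigma> h * group_sum_mat G e d (\<lambda>g. \<sigma> g * B * \<rho> (inv g))"
    by (rule group_sum_mat_mult_left[symmetric, OF sandwich \<sigma>c[OF h]])
  finally show ?thesis .
qed

lemma character_product_sum:
  assumes \<rho>: "is_rep G \<rho> d" and \<sigma>: "is_rep G \<sigma> e"
  shows "(\<Sum>g\<in>carrier G. character \<sigma> e g * character \<rho> d (inv g))
    = (\<Sum>i<e. \<Sum>p<d. group_sum_mat G e d (\<lambda>g. \<sigma> g * mat_unit e d i p * \<rho> (inv g)) $$ (i,p))"
proof -
  have "(\<Sum>g\<in>carrier G. character \<sigma> e g * character \<rho> d (inv g))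
      = (\<Sum>g\<in>carrier G. \<Sum>i<e. \<Sum>p<d. \<sigma> g $$ (i,i) * \<rho> (inv g) $$ (p,p))"
    unfolding character_def by (simp add: sum_product)
  also have "\<dots> = (\<Sum>i<e. \<Sum>p<d. \<Sum>g\<in>carrier G. \<sigma> g $$ (i,i) * \<rho> (inv g) $$ (p,p))"
    by (subst sum.swap) (intro sum.cong refl sum.swap)
  also have "\<dots> = (\<Sum>i<e. \<Sum>p<d. group_sum_mat G e d (\<lambda>g. \<sigma> g * mat_unit e d i p * \<rho> (inv g)) $$ (i,p))"
    by (intro sum.cong refl)
      (simp add: index_mult_mat_unit[OF is_rep_carrier[OF \<sigma>] is_rep_carrier[OF \<rho> inv_closed]])
  finally show ?thesis .
qed

lemma character_orthogonal:
  assumes irr\<rho>: "irreducible_rep G \<rho> d" and irr\<sigma>: "irreducible_rep G \<sigma> e"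
    and noniso: "\<not> iso_rep G \<rho> d \<sigma> e"
  shows "(\<Sum>g\<in>carrier G. character \<sigma> e g * character \<rho> d (inv g)) = 0"
proof -
  note \<rho> = irreducible_rep_is_rep[OF irr\<rho>] and \<sigma> = irreducible_rep_is_rep[OF irr\<sigma>]
  have "group_sum_mat G e d (\<lambda>g. \<sigma> g * mat_unit e d i p * \<rho> (inv g)) = 0\<^sub>m e d" for i p
    using schur_lemma_iso[OF irr\<rho> irr\<sigma> group_sum_mat_carrier averaged_intertwiner[OF \<rho> \<sigma> mat_unit_carrier]] noniso
    by blast
  thus ?thesis unfolding character_product_sum[OF \<rho> \<sigma>] by simp
qed

lemma character_norm:
  assumes irr: "irreducible_rep G \<rho> d"
  shows "(\<Sum>g\<in>carrier G. character \<rho> d g * character \<rho> d (inv g)) = of_nat (order G)"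
proof -
  note rep = irreducible_rep_is_rep[OF irr] and d = irreducible_rep_dim_pos[OF irr]
  note \<rho> = is_rep_carrier[OF rep]
  have entry: "group_sum_mat G d d (\<lambda>g. \<rho> g * mat_unit d d q p * \<rho> (inv g)) $$ (i,r)
     = (if i = r \<and> q = p then of_nat (order G) / of_nat d else 0)"
    if q: "q < d" and p: "p < d" and i: "i < d" and r: "r < d" for q p i r
  proof -
    let ?A = "group_sum_mat G d d (\<lambda>g. \<rho> g * mat_unit d d q p * \<rho> (inv g))"
    obtain c where c: "?A = c \<cdot>\<^sub>m 1\<^sub>m d"
      using schur_lemma_scalar[OF irr group_sum_mat_carrier averaged_intertwiner[OF rep rep mat_unit_carrier]] .
    have "mat_trace (\<rho> g * mat_unit d d q p * \<rho> (inv g)) = mat_trace (mat_unit d d q p :: complex mat)"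
      if g: "g \<in> carrier G" for g
    proof -
      note \<rho>g = \<rho>[OF g] and \<rho>g' = \<rho>[OF inv_closed[OF g]]
      have "mat_trace (\<rho> g * mat_unit d d q p * \<rho> (inv g)) = mat_trace (\<rho> g * (mat_unit d d q p * \<rho> (inv g)))"
        by (simp add: assoc_mult_mat[OF \<rho>g mat_unit_carrier \<rho>g'])
      also have "\<dots> = mat_trace (mat_unit d d q p * \<rho> (inv g) * \<rho> g)"
        by (rule mat_trace_mult_comm[OF \<rho>g mult_carrier_mat[OF mat_unit_carrier \<rho>g']])
      also have "\<dots> = mat_trace (mat_unit d d q p :: complex mat)"
        by (simp add: assoc_mult_mat[OF mat_unit_carrier \<rho>g' \<rho>g] is_rep_inv(1)[OF rep g]
            right_mult_one_mat[OF mat_unit_carrier])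
      finally show ?thesis .
    qed
    hence "mat_trace ?A = of_nat (order G) * (if q = p then 1 else 0)"
      using q p by (subst mat_trace_group_sum_mat) (simp_all add: mat_trace_mat_unit Coset.order_def carrier_matD[OF \<rho>])
    hence "c = of_nat (order G) * (if q = p then 1 else 0) / of_nat d"
      using c d by (simp add: mat_trace_smult_one field_simps)
    thus ?thesis using c i r by auto
  qed
  have "(\<Sum>g\<in>carrier G. character \<rho> d g * character \<rho> d (inv g))
     = (\<Sum>i<d. \<Sum>p<d. if i = p then of_nat (order G) / of_nat d else (0::complex))"
    unfolding character_product_sum[OF rep rep] by (intro sum.cong refl) (simp add: entry del: group_sum_mat_index)
  also have "\<dots> = of_nat (order G)" using d by simp
  finally show ?thesis .
qed

lemma averaged_form_invariant:
  assumes rep: "is_rep G \<rho> d" and h: "h \<in> carrier G"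
  shows "mat_adj (\<rho> h) * averaged_form G \<rho> d * \<rho> h = averaged_form G \<rho> d"
proof -
  note \<rho> = is_rep_carrier[OF rep]
  have adj: "mat_adj (\<rho> g) * \<rho> g \<in> carrier_mat d d" if "g \<in> carrier G" for g
    by (rule mult_carrier_mat[OF mat_adj_carrier[OF \<rho>[OF that]] \<rho>[OF that]])
  have "mat_adj (\<rho> h) * averaged_form G \<rho> d = group_sum_mat G d d (\<lambda>g. mat_adj (\<rho> h) * (mat_adj (\<rho> g) * \<rho> g))"
    unfolding averaged_form_def by (rule group_sum_mat_mult_left[OF adj mat_adj_carrier[OF \<rho>[OF h]]])
  hence "mat_adj (\<rho> h) * averaged_form G \<rho> d * \<rho> h
      = group_sum_mat G d d (\<lambda>g. mat_adj (\<rho> h) * (mat_adj (\<rho> g) * \<rho> g) * \<rho> h)"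
    using group_sum_mat_mult_right[OF mult_carrier_mat[OF mat_adj_carrier[OF \<rho>[OF h]] adj] \<rho>[OF h]] by simp
  also have "\<dots> = group_sum_mat G d d (\<lambda>g. mat_adj (\<rho> (g \<otimes> h)) * \<rho> (g \<otimes> h))"
  proof (rule group_sum_mat_cong)
    fix g assume g: "g \<in> carrier G"
    note \<rho>g = \<rho>[OF g] and \<rho>h = \<rho>[OF h]
    have "mat_adj (\<rho> (g \<otimes> h)) * \<rho> (g \<otimes> h) = mat_adj (\<rho> h) * mat_adj (\<rho> g) * (\<rho> g * \<rho> h)"
      by (simp add: is_rep_mult[OF rep g h] mat_adj_mult[OF \<rho>g \<rho>h])
    also have "\<dots> = mat_adj (\<rho> h) * (mat_adj (\<rho> g) * \<rho> g) * \<rho> h"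
      using assoc_mult_mat[OF mat_adj_carrier[OF \<rho>h] mat_adj_carrier[OF \<rho>g] mult_carrier_mat[OF \<rho>g \<rho>h]]
        assoc_mult_mat[OF mat_adj_carrier[OF \<rho>h] mult_carrier_mat[OF mat_adj_carrier[OF \<rho>g] \<rho>g] \<rho>h]
        assoc_mult_mat[OF mat_adj_carrier[OF \<rho>g] \<rho>g \<rho>h]
      by simp
    finally show "mat_adj (\<rho> h) * (mat_adj (\<rho> g) * \<rho> g) * \<rho> h = mat_adj (\<rho> (g \<otimes> h)) * \<rho> (g \<otimes> h)" ..
  qed
  also have "\<dots> = averaged_form G \<rho> d"
    unfolding averaged_form_def by (rule group_sum_mat_reindex[symmetric, OF bij_betw_mult_right[OF h]])
  finally show ?thesis .
qed

lemma averaged_form_invertible: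
  assumes rep: "is_rep G \<rho> d"
  shows "invertible_mat (averaged_form G \<rho> d)"
proof -
  note \<rho> = is_rep_carrier[OF rep]
  have adj: "mat_adj (\<rho> g) * \<rho> g \<in> carrier_mat d d" if "g \<in> carrier G" for g
    by (rule mult_carrier_mat[OF mat_adj_carrier[OF \<rho>[OF that]] \<rho>[OF that]])
  have "v = 0\<^sub>v d" if v: "v \<in> carrier_vec d" and Hv: "averaged_form G \<rho> d *\<^sub>v v = 0\<^sub>v d" for v
  proof -
    have "(\<Sum>g\<in>carrier G. (\<rho> g *\<^sub>v v) \<bullet>c (\<rho> g *\<^sub>v v)) = (\<Sum>g\<in>carrier G. ((mat_adj (\<rho> g) * \<rho> g) *\<^sub>v v) \<bullet>c v)"
    proof (rule sum.cong[OF refl])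
      fix g assume g: "g \<in> carrier G"
      show "(\<rho> g *\<^sub>v v) \<bullet>c (\<rho> g *\<^sub>v v) = ((mat_adj (\<rho> g) * \<rho> g) *\<^sub>v v) \<bullet>c v"
        using assoc_mult_mat_vec[OF mat_adj_carrier[OF \<rho>[OF g]] \<rho>[OF g] v]
          cscalar_prod_mat_adj[OF \<rho>[OF g] v mult_mat_vec_carrier[OF \<rho>[OF g] v]] by simp
    qed
    also have "\<dots> = (averaged_form G \<rho> d *\<^sub>v v) \<bullet>c v"
      unfolding averaged_form_def by (rule group_sum_mat_cscalar_prod[symmetric, OF adj v])
    also have "\<dots> = 0" using v by (simp add: Hv)
    finally have "(\<Sum>g\<in>carrier G. (\<rho> g *\<^sub>v v) \<bullet>c (\<rho> g *\<^sub>v v)) = 0" .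
    hence "(\<rho> \<one> *\<^sub>v v) \<bullet>c (\<rho> \<one> *\<^sub>v v) = 0"
      using finite_carrier by (subst (asm) sum_nonneg_eq_0_iff) (auto intro: conjugate_square_ge_0_vec)
    thus ?thesis using v conjugate_square_eq_0_vec[OF v] by (simp add: is_rep_one[OF rep])
  qed
  hence "det (averaged_form G \<rho> d) \<noteq> 0"
    unfolding det_0_iff_vec_prod_zero[OF averaged_form_carrier] by auto
  thus ?thesis by (rule invertible_mat_if_det_nonzero[OF averaged_form_carrier])
qed

lemma character_inv:
  assumes rep: "is_rep G \<rho> d" and g0: "g0 \<in> carrier G"
  shows "character \<rho> d (inv g0) = cnj (character \<rho> d g0)"
proof -
  note \<rho> = is_rep_carrier[OF rep]
  define H where "H = averaged_form G \<rho> d"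
  have H: "H \<in> carrier_mat d d" "invertible_mat H"
    unfolding H_def by (rule averaged_form_carrier, rule averaged_form_invertible[OF rep])
  have invariant: "mat_adj (\<rho> h) * H * \<rho> h = H" if "h \<in> carrier G" for h
    unfolding H_def by (rule averaged_form_invariant[OF rep that])
  have "H * \<rho> (inv g0) = mat_adj (\<rho> g0) * H"
  proof -
    have a0: "mat_adj (\<rho> g0) * H \<in> carrier_mat d d"
      by (rule mult_carrier_mat[OF mat_adj_carrier[OF \<rho>[OF g0]] H(1)])
    have "mat_adj (\<rho> g0) * H = mat_adj (\<rho> g0) * H * (\<rho> g0 * \<rho> (inv g0))"
      using is_rep_inv(2)[OF rep g0] right_mult_one_mat[OF a0] by simp
    also have "\<dots> = H * \<rho> (inv g0)"
      using assoc_mult_mat[OF a0 \<rho>[OF g0] \<rho>[OF inv_closed[OF g0]]] invariant[OF g0] by simp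
    finally show ?thesis ..
  qed
  hence "mat_trace (\<rho> (inv g0)) = mat_trace (mat_adj (\<rho> g0))"
    using \<rho>[OF g0] \<rho>[OF inv_closed[OF g0]] H by (intro mat_trace_intertwined) auto
  thus ?thesis using \<rho>[OF g0] g0
    by (simp add: character_mat_trace[OF rep g0] character_mat_trace[OF rep inv_closed[OF g0]] mat_trace_adj)
qed

lemma fourier_scalar_inv:
  assumes rep: "is_rep G \<rho> d"
  shows "fourier_scalar G (\<lambda>g. F (inv g)) \<rho> d = cnj (fourier_scalar G F \<rho> d)"
proof -
  have "(\<Sum>g\<in>carrier G. complex_of_real (F (inv g)) * character \<rho> d g)
     = (\<Sum>g\<in>carrier G. complex_of_real (F (inv (inv g))) * character \<rho> d (inv g))"
    by (rule sum.reindex_bij_betw[OF bij_betw_inv, symmetric])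
  also have "\<dots> = (\<Sum>g\<in>carrier G. cnj (complex_of_real (F g) * character \<rho> d g))"
    by (intro sum.cong refl) (simp add: character_inv[OF rep])
  finally show ?thesis unfolding fourier_scalar_def by simp
qed

lemma fourier_scalar_diff_const:
  "fourier_scalar G (\<lambda>g. F g - c) \<rho> d
   = fourier_scalar G F \<rho> d - complex_of_real c * (\<Sum>g\<in>carrier G. character \<rho> d g) / of_nat d"
  unfolding fourier_scalar_def
  by (simp add: sum_subtractf left_diff_distrib sum_distrib_left diff_divide_distrib)

lemma norm_fourier_scalar_expansion:
  fixes k :: nat and \<rho> :: "nat \<Rightarrow> 'g \<Rightarrow> complex mat" and d :: "nat \<Rightarrow> nat"
  assumes irr: "\<forall>j<k. irreducible_rep G (\<rho> j) (d j)"
    and noniso: "\<forall>j<k. \<forall>l<k. j \<noteq> l \<longrightarrow> \<not> iso_rep G (\<rho> j) (d j) (\<rho> l) (d l)"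
    and F: "\<forall>g\<in>carrier G. complex_of_real (F g) = (\<Sum>l<k. a l * character (\<rho> l) (d l) g)"
    and j: "j < k"
  shows "cmod (fourier_scalar G F (\<rho> j) (d j)) = real (order G) / real (d j) * cmod (a j)"
proof -
  note rep = irreducible_rep_is_rep[OF irr[rule_format, OF j]]
  have "cnj (\<Sum>g\<in>carrier G. complex_of_real (F g) * character (\<rho> j) (d j) g)
      = (\<Sum>g\<in>carrier G. complex_of_real (F g) * character (\<rho> j) (d j) (inv g))"
    by (simp add: character_inv[OF rep])
  also have "\<dots> = (\<Sum>l<k. a l * (\<Sum>g\<in>carrier G. character (\<rho> l) (d l) g * character (\<rho> j) (d j) (inv g)))"
    using F by (simp add: sum_distrib_left sum_distrib_right mult.assoc sum.swap[of _ "carrier G"])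
  also have "\<dots> = (\<Sum>l<k. if l = j then a j * of_nat (order G) else 0)"
    using irr noniso j by (intro sum.cong refl) (auto simp: character_norm character_orthogonal)
  also have "\<dots> = a j * of_nat (order G)" using j by (simp add: sum.delta)
  finally have "cmod (\<Sum>g\<in>carrier G. complex_of_real (F g) * character (\<rho> j) (d j) g) = cmod (a j) * real (order G)"
    by (metis complex_mod_cnj norm_mult norm_of_nat)
  thus ?thesis unfolding fourier_scalar_def by (simp add: norm_divide)
qed

lemma irreducible_triv_rep: "irreducible_rep G triv_rep 1"
  unfolding irreducible_rep_def
proof (intro conjI allI impI)
  show "is_rep G triv_rep 1" unfolding is_rep_def triv_rep_def by auto
next
  fix W assume W: "invariant_subspace G triv_rep 1 W"
  show "W = {0\<^sub>v 1} \<or> W = carrier_vec 1"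
  proof (cases "W = {0\<^sub>v 1}")
    case False
    moreover have sub: "W \<subseteq> carrier_vec 1" and "0\<^sub>v 1 \<in> W" and smult: "\<forall>c. \<forall>v\<in>W. c \<cdot>\<^sub>v v \<in> W"
      using W unfolding invariant_subspace_def by auto
    ultimately obtain v where v: "v \<in> W" "v \<noteq> 0\<^sub>v 1" "v \<in> carrier_vec 1" by auto
    have "v $ 0 \<noteq> 0" using v(2,3) by (auto intro!: eq_vecI)
    have "u \<in> W" if u: "u \<in> carrier_vec 1" for u
    proof -
      have "(u $ 0 / v $ 0) \<cdot>\<^sub>v v = u" using u v(3) \<open>v $ 0 \<noteq> 0\<close> by (intro eq_vecI) auto
      thus ?thesis using smult v(1) by metis
    qed
    with sub show ?thesis by auto
  qed simp
qed simp

lemma iso_triv_repD: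
  assumes rep: "is_rep G \<rho> d" and iso: "iso_rep G \<rho> d triv_rep 1" and g: "g \<in> carrier G"
  shows "d = 1" "\<rho> g = 1\<^sub>m 1"
proof -
  from iso obtain P where d: "d = 1" and P: "P \<in> carrier_mat 1 1" "invertible_mat P"
    and comm: "P * \<rho> g = triv_rep g * P"
    using g unfolding iso_rep_def by auto
  show "d = 1" by fact
  obtain P' where P': "P' \<in> carrier_mat 1 1" "P' * P = 1\<^sub>m 1"
    using invertible_mat_inverse[OF P(2,1)] by blast
  have \<rho>g: "\<rho> g \<in> carrier_mat 1 1" using is_rep_carrier[OF rep g] d by simp
  have "\<rho> g = P' * (P * \<rho> g)" using P P' \<rho>g by (simp flip: assoc_mult_mat)
  also have "\<dots> = 1\<^sub>m 1" using comm P P' by (simp add: triv_rep_def)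
  finally show "\<rho> g = 1\<^sub>m 1" .
qed

lemma character_sum_nontriv:
  assumes irr: "irreducible_rep G \<rho> d" and nontriv: "\<not> iso_rep G \<rho> d triv_rep 1"
  shows "(\<Sum>g\<in>carrier G. character \<rho> d g) = 0"
proof -
  have "(\<Sum>g\<in>carrier G. character \<rho> d g) = (\<Sum>g\<in>carrier G. character \<rho> d (inv g))"
    by (rule sum.reindex_bij_betw[OF bij_betw_inv, symmetric])
  also have "\<dots> = (\<Sum>g\<in>carrier G. character triv_rep 1 g * character \<rho> d (inv g))"
    by (simp add: character_def triv_rep_def)
  also have "\<dots> = 0" by (rule character_orthogonal[OF irr irreducible_triv_rep nontriv])
  finally show ?thesis .
qed

end

section \<open>Fourier transforms in a direct sum of irreducibles\<close>

text \<open>In the direct sum of the representations indexed by js, the i-th basis vector lies in the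
  block of the summand with index block_labels d js ! i.\<close>

definition block_labels :: "(nat \<Rightarrow> nat) \<Rightarrow> nat list \<Rightarrow> nat list" where
  "block_labels d js = concat (map (\<lambda>j. replicate (d j) j) js)"

lemma block_labels_Cons: "block_labels d (j # js) = replicate (d j) j @ block_labels d js"
  unfolding block_labels_def by simp

lemma length_block_labels: "length (block_labels d js) = sum_list (map d js)"
  by (induction js) (auto simp: block_labels_def)

lemma sum_block_labels:
  "(\<Sum>i<length (block_labels d js). h (block_labels d js ! i)) = (\<Sum>j\<leftarrow>js. of_nat (d j) * h j)"
proof -
  have "(\<Sum>i<length (block_labels d js). h (block_labels d js ! i)) = sum_list (map h (block_labels d js))"
    by (simp add: sum_list_sum_nth atLeast0LessThan)
  also have "\<dots> = (\<Sum>j\<leftarrow>js. of_nat (d j) * h j)"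
    by (induction js) (auto simp: block_labels_def sum_list_replicate)
  finally show ?thesis .
qed

lemma sum_list_concat_replicate:
  "(\<Sum>j\<leftarrow>concat (map (\<lambda>j. replicate (m j) j) [0..<k]). f j) = (\<Sum>j<k. of_nat (m j) * f j)"
  for f :: "nat \<Rightarrow> 'a :: semiring_1"
  by (induction k) (auto simp: sum_list_replicate)

lemma dsum_list_Cons: "dsum_list (r # rs) = dsum_rep r (dsum_list rs)"
  unfolding dsum_list_def by simp

lemma snd_dsum_list: "snd (dsum_list (map (\<lambda>j. (\<rho> j, d j)) js)) = sum_list (map d js)"
  by (induction js) (auto simp: dsum_list_def dsum_rep_def split: prod.split)

lemma fst_dsum_list_Cons:
  "fst (dsum_list ((\<rho> j, d j) # map (\<lambda>j. (\<rho> j, d j)) js)) g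
   = four_block_mat (\<rho> j g) (0\<^sub>m (d j) (sum_list (map d js))) (0\<^sub>m (sum_list (map d js)) (d j))
       (fst (dsum_list (map (\<lambda>j. (\<rho> j, d j)) js)) g)"
  using snd_dsum_list[of \<rho> d js]
  by (cases "dsum_list (map (\<lambda>j. (\<rho> j, d j)) js)") (simp add: dsum_list_Cons dsum_rep_def)

lemma fst_dsum_list_carrier:
  assumes "\<And>j. j \<in> set js \<Longrightarrow> is_rep G (\<rho> j) (d j)" and "g \<in> carrier G"
  shows "fst (dsum_list (map (\<lambda>j. (\<rho> j, d j)) js)) g \<in> carrier_mat (sum_list (map d js)) (sum_list (map d js))"
  using assms
proof (induction js)
  case Nil
  show ?case by (simp add: dsum_list_def)
next
  case (Cons j js)
  have "\<rho> j g \<in> carrier_mat (d j) (d j)" using Cons.prems by (intro is_rep_carrier) auto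
  moreover have "fst (dsum_list (map (\<lambda>j. (\<rho> j, d j)) js)) g \<in> carrier_mat (sum_list (map d js)) (sum_list (map d js))"
    using Cons by auto
  ultimately show ?case by (simp add: fst_dsum_list_Cons)
qed

context finite_group
begin

lemma fourier_mat_dsum_list:
  assumes irr: "\<And>j. j \<in> set js \<Longrightarrow> irreducible_rep G (\<rho> j) (d j)" and F: "class_fun G F"
  shows "fourier_mat G F (fst (dsum_list (map (\<lambda>j. (\<rho> j, d j)) js))) (sum_list (map d js))
    = diagonal_mat (sum_list (map d js)) (\<lambda>i. fourier_scalar G F (\<rho> (block_labels d js ! i)) (d (block_labels d js ! i)))"
  using irr
proof (induction js)
  case Nil
  show ?case by (auto simp: diagonal_mat_def intro!: eq_matI)
next
  case (Cons j js)
  define M where "M = fst (dsum_list (map (\<lambda>j. (\<rho> j, d j)) js))"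
  define D where "D = sum_list (map d js)"
  have M: "M g \<in> carrier_mat D D" if "g \<in> carrier G" for g
    unfolding M_def D_def using Cons.prems that
    by (intro fst_dsum_list_carrier irreducible_rep_is_rep) auto
  have \<rho>j: "\<rho> j g \<in> carrier_mat (d j) (d j)" if "g \<in> carrier G" for g
    using Cons.prems that by (intro is_rep_carrier irreducible_rep_is_rep) auto
  have IH: "fourier_mat G F M D = diagonal_mat D (\<lambda>i. fourier_scalar G F (\<rho> (block_labels d js ! i)) (d (block_labels d js ! i)))"
    using Cons unfolding M_def D_def by auto
  have Sj: "fourier_mat G F (\<rho> j) (d j) = fourier_scalar G F (\<rho> j) (d j) \<cdot>\<^sub>m 1\<^sub>m (d j)"
    using Cons.prems F by (intro fourier_mat_class_fun) auto
  have label: "block_labels d (j # js) ! a = (if a < d j then j else block_labels d js ! (a - d j))" for a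
    unfolding block_labels_Cons by (simp add: nth_append)
  have "fourier_mat G F (\<lambda>g. four_block_mat (\<rho> j g) (0\<^sub>m (d j) D) (0\<^sub>m D (d j)) (M g)) (d j + D)
      = diagonal_mat (d j + D) (\<lambda>i. fourier_scalar G F (\<rho> (block_labels d (j # js) ! i)) (d (block_labels d (j # js) ! i)))"
  proof (rule eq_matI)
    fix a b assume "a < dim_row (diagonal_mat (d j + D) (\<lambda>i. fourier_scalar G F (\<rho> (block_labels d (j # js) ! i)) (d (block_labels d (j # js) ! i))))"
      "b < dim_col (diagonal_mat (d j + D) (\<lambda>i. fourier_scalar G F (\<rho> (block_labels d (j # js) ! i)) (d (block_labels d (j # js) ! i))))"
    hence a: "a < d j + D" and b: "b < d j + D" by (auto simp: diagonal_mat_def)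
    have "fourier_mat G F (\<lambda>g. four_block_mat (\<rho> j g) (0\<^sub>m (d j) D) (0\<^sub>m D (d j)) (M g)) (d j + D) $$ (a,b)
      = (if a < d j then if b < d j then fourier_mat G F (\<rho> j) (d j) $$ (a,b) else 0
         else if b < d j then 0 else fourier_mat G F M D $$ (a - d j, b - d j))"
      unfolding fourier_mat_def using a b
      by (auto intro!: sum.cong simp: carrier_matD[OF \<rho>j] carrier_matD[OF M])
    also have "\<dots> = diagonal_mat (d j + D) (\<lambda>i. fourier_scalar G F (\<rho> (block_labels d (j # js) ! i)) (d (block_labels d (j # js) ! i))) $$ (a,b)"
      unfolding Sj IH using a b by (auto simp: diagonal_mat_def label)
    finally show "fourier_mat G F (\<lambda>g. four_block_mat (\<rho> j g) (0\<^sub>m (d j) D) (0\<^sub>m D (d j)) (M g)) (d j + D) $$ (a,b)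
      = diagonal_mat (d j + D) (\<lambda>i. fourier_scalar G F (\<rho> (block_labels d (j # js) ! i)) (d (block_labels d (j # js) ! i))) $$ (a,b)" .
  qed (auto simp: diagonal_mat_def)
  thus ?case by (simp add: fst_dsum_list_Cons M_def D_def[symmetric] fourier_mat_def)
qed

lemma mat_trace_fourier_dsum_list:
  fixes js :: "nat list"
  assumes irr: "\<And>j. j \<in> set js \<Longrightarrow> irreducible_rep G (\<rho> j) (d j)"
    and \<sigma>: "\<And>g. g \<in> carrier G \<Longrightarrow> \<sigma> g \<in> carrier_mat n n"
    and iso: "iso_rep G \<sigma> n (fst (dsum_list (map (\<lambda>j. (\<rho> j, d j)) js))) (snd (dsum_list (map (\<lambda>j. (\<rho> j, d j)) js)))"
    and F: "class_fun G F" and F': "class_fun G F'"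
  shows "mat_trace (fourier_mat G F' \<sigma> n * fourier_mat G F \<sigma> n)
    = (\<Sum>j\<leftarrow>js. of_nat (d j) * (fourier_scalar G F' (\<rho> j) (d j) * fourier_scalar G F (\<rho> j) (d j)))"
proof -
  define M where "M = fst (dsum_list (map (\<lambda>j. (\<rho> j, d j)) js))"
  define D where "D = sum_list (map d js)"
  define s where "s H i = fourier_scalar G H (\<rho> (block_labels d js ! i)) (d (block_labels d js ! i))" for H i
  obtain P where nD: "n = D" and P: "P \<in> carrier_mat D D" "invertible_mat P"
    and comm: "\<And>g. g \<in> carrier G \<Longrightarrow> P * \<sigma> g = M g * P"
    using iso unfolding iso_rep_def M_def D_def snd_dsum_list by auto
  have M: "M g \<in> carrier_mat D D" if "g \<in> carrier G" for g
    unfolding M_def D_def using irr irreducible_rep_is_rep that by (intro fst_dsum_list_carrier) auto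
  have diag: "P * fourier_mat G H \<sigma> n = diagonal_mat D (s H) * P" if H: "class_fun G H" for H
  proof -
    have "P * fourier_mat G H \<sigma> n = fourier_mat G H M D * P"
      unfolding nD by (rule fourier_mat_intertwine[OF P(1)]) (use \<sigma> M comm nD in auto)
    also have "fourier_mat G H M D = diagonal_mat D (s H)"
      unfolding M_def D_def s_def by (rule fourier_mat_dsum_list) (use irr H in auto)
    finally show ?thesis .
  qed
  have A: "fourier_mat G H \<sigma> n \<in> carrier_mat D D" for H by (simp add: nD)
  have "P * (fourier_mat G F' \<sigma> n * fourier_mat G F \<sigma> n) = (P * fourier_mat G F' \<sigma> n) * fourier_mat G F \<sigma> n"
    by (rule assoc_mult_mat[symmetric, OF P(1) A A])
  also have "\<dots> = diagonal_mat D (s F') * (P * fourier_mat G F \<sigma> n)"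
    unfolding diag[OF F'] by (rule assoc_mult_mat[OF diagonal_mat_carrier P(1) A])
  also have "\<dots> = (diagonal_mat D (s F') * diagonal_mat D (s F)) * P"
    unfolding diag[OF F] by (rule assoc_mult_mat[symmetric, OF diagonal_mat_carrier diagonal_mat_carrier P(1)])
  finally have "mat_trace (fourier_mat G F' \<sigma> n * fourier_mat G F \<sigma> n) = mat_trace (diagonal_mat D (s F') * diagonal_mat D (s F))"
    using P by (intro mat_trace_intertwined) (auto simp: nD intro: mult_carrier_mat[OF diagonal_mat_carrier diagonal_mat_carrier])
  also have "\<dots> = (\<Sum>j\<leftarrow>js. of_nat (d j) * (fourier_scalar G F' (\<rho> j) (d j) * fourier_scalar G F (\<rho> j) (d j)))"
    unfolding mat_trace_diagonal_mult s_def D_def by (subst length_block_labels[symmetric]) (rule sum_block_labels)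
  finally show ?thesis .
qed

lemma mat_trace_fourier_multiple_sum:
  fixes k :: nat and \<rho> :: "nat \<Rightarrow> 'g \<Rightarrow> complex mat" and d mult :: "nat \<Rightarrow> nat"
  assumes irr: "\<forall>j<k. irreducible_rep G (\<rho> j) (d j)"
    and \<sigma>: "\<And>g. g \<in> carrier G \<Longrightarrow> \<sigma> g \<in> carrier_mat n n"
    and iso: "iso_rep G \<sigma> n (fst (multiple_sum k \<rho> d mult)) (snd (multiple_sum k \<rho> d mult))"
    and F: "class_fun G F" and F': "class_fun G F'"
  shows "mat_trace (fourier_mat G F' \<sigma> n * fourier_mat G F \<sigma> n)
    = (\<Sum>j<k. of_nat (mult j * d j) * fourier_scalar G F' (\<rho> j) (d j) * fourier_scalar G F (\<rho> j) (d j))"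
proof -
  define js where "js = concat (map (\<lambda>j. replicate (mult j) j) [0..<k])"
  have "multiple_sum k \<rho> d mult = dsum_list (map (\<lambda>j. (\<rho> j, d j)) js)"
    unfolding multiple_sum_def js_def by (simp add: map_concat comp_def)
  hence "mat_trace (fourier_mat G F' \<sigma> n * fourier_mat G F \<sigma> n)
      = (\<Sum>j\<leftarrow>js. of_nat (d j) * (fourier_scalar G F' (\<rho> j) (d j) * fourier_scalar G F (\<rho> j) (d j)))"
    using irr iso by (intro mat_trace_fourier_dsum_list[OF _ \<sigma> _ F F']) (auto simp: js_def)
  thus ?thesis unfolding js_def by (simp add: sum_list_concat_replicate mult_ac)
qed

end

section \<open>The permutation representation\<close>

lemma perm_rep_carrier: "perm_rep \<phi> xs g \<in> carrier_mat (length xs) (length xs)"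
  unfolding perm_rep_def by simp

context finite_group
begin

lemma act_inv_eq_iff:
  assumes ga: "group_action G X \<phi>" and g: "g \<in> carrier G" and x: "x \<in> X" and y: "y \<in> X"
  shows "\<phi> (inv g) y = x \<longleftrightarrow> \<phi> g x = y"
proof -
  have one: "\<phi> \<one> z = z" if "z \<in> X" for z
    using group_action.id_eq_one[OF ga] that by (metis restrict_apply')
  show ?thesis
    using group_action.composition_rule[OF ga y g inv_closed[OF g]]
      group_action.composition_rule[OF ga x inv_closed[OF g] g] g one[OF x] one[OF y] by auto
qed

lemma index_fourier_mat_perm_rep:
  "i < length xs \<Longrightarrow> j < length xs \<Longrightarrow>
   fourier_mat G F (perm_rep \<phi> xs) (length xs) $$ (i,j) = complex_of_real (act_dist G \<phi> F (xs ! j) (xs ! i))"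
  unfolding act_dist_def perm_rep_def fourier_mat_def by (auto intro!: sum.cong)

lemma act_dist_inv:
  assumes ga: "group_action G X \<phi>" and x: "x \<in> X" and y: "y \<in> X"
  shows "act_dist G \<phi> (\<lambda>g. F (inv g)) x y = act_dist G \<phi> F y x"
proof -
  have "act_dist G \<phi> (\<lambda>g. F (inv g)) x y = (\<Sum>g\<in>carrier G. if \<phi> (inv g) x = y then F (inv (inv g)) else 0)"
    unfolding act_dist_def by (rule sum.reindex_bij_betw[OF bij_betw_inv, symmetric])
  also have "\<dots> = act_dist G \<phi> F y x"
    unfolding act_dist_def using ga x y by (intro sum.cong refl) (simp add: act_inv_eq_iff)
  finally show ?thesis .
qed

lemma mat_trace_fourier_perm_rep:
  assumes ga: "group_action G X \<phi>" and xs: "distinct xs" "set xs = X"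
  shows "mat_trace (fourier_mat G (\<lambda>g. F (inv g)) (perm_rep \<phi> xs) (length xs) * fourier_mat G F (perm_rep \<phi> xs) (length xs))
    = complex_of_real (\<Sum>x\<in>X. \<Sum>y\<in>X. (act_dist G \<phi> F x y)\<^sup>2)"
proof -
  let ?L = "length xs"
  have bij: "bij_betw ((!) xs) {..<?L} X"
    using bij_betw_nth[OF xs(1) refl xs(2)[symmetric]] by (simp add: lessThan_atLeast0)
  have "mat_trace (fourier_mat G (\<lambda>g. F (inv g)) (perm_rep \<phi> xs) ?L * fourier_mat G F (perm_rep \<phi> xs) ?L)
      = (\<Sum>i<?L. \<Sum>l<?L. complex_of_real (act_dist G \<phi> (\<lambda>g. F (inv g)) (xs ! l) (xs ! i) * act_dist G \<phi> F (xs ! i) (xs ! l)))"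
    unfolding mat_trace_def
    by (auto simp: index_mult_mat_sum[OF fourier_mat_carrier fourier_mat_carrier] index_fourier_mat_perm_rep
        simp del: index_mult_mat(1) intro!: sum.cong)
  also have "\<dots> = complex_of_real (\<Sum>i<?L. \<Sum>l<?L. (act_dist G \<phi> F (xs ! i) (xs ! l))\<^sup>2)"
    unfolding of_real_sum
    by (intro sum.cong refl) (simp add: act_dist_inv[OF ga, unfolded xs(2)[symmetric]] power2_eq_square)
  also have "(\<Sum>i<?L. \<Sum>l<?L. (act_dist G \<phi> F (xs ! i) (xs ! l))\<^sup>2) = (\<Sum>x\<in>X. \<Sum>y\<in>X. (act_dist G \<phi> F x y)\<^sup>2)"
    by (subst (1 2) sum.reindex_bij_betw[OF bij, symmetric]) (rule refl)
  finally show ?thesis .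
qed

lemma sum_sq_act_dist_plancherel:
  fixes k :: nat and \<rho> :: "nat \<Rightarrow> 'g \<Rightarrow> complex mat" and d mult :: "nat \<Rightarrow> nat"
  assumes ga: "group_action G X \<phi>" and xs: "distinct xs" "set xs = X"
    and irr: "\<forall>j<k. irreducible_rep G (\<rho> j) (d j)"
    and iso: "iso_rep G (perm_rep \<phi> xs) (length xs) (fst (multiple_sum k \<rho> d mult)) (snd (multiple_sum k \<rho> d mult))"
    and F: "class_fun G F"
  shows "(\<Sum>x\<in>X. \<Sum>y\<in>X. (act_dist G \<phi> F x y)\<^sup>2)
    = (\<Sum>j<k. real (mult j * d j) * (cmod (fourier_scalar G F (\<rho> j) (d j)))\<^sup>2)"
proof -
  have "complex_of_real (\<Sum>x\<in>X. \<Sum>y\<in>X. (act_dist G \<phi> F x y)\<^sup>2)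
      = (\<Sum>j<k. of_nat (mult j * d j) * fourier_scalar G (\<lambda>g. F (inv g)) (\<rho> j) (d j) * fourier_scalar G F (\<rho> j) (d j))"
    unfolding mat_trace_fourier_perm_rep[OF ga xs, symmetric]
    by (rule mat_trace_fourier_multiple_sum[OF irr perm_rep_carrier iso F class_fun_inv[OF F]])
  also have "\<dots> = complex_of_real (\<Sum>j<k. real (mult j * d j) * (cmod (fourier_scalar G F (\<rho> j) (d j)))\<^sup>2)"
  proof -
    have "cnj z * z = complex_of_real ((cmod z)\<^sup>2)" for z
      by (simp only: complex_norm_square mult.commute)
    thus ?thesis using irr by (simp add: fourier_scalar_inv irreducible_rep_is_rep mult.assoc)
  qed
  finally show ?thesis by (simp only: of_real_eq_iff)
qed

lemma card_transporter:
  assumes ta: "transitive_action G X \<phi>" and X: "finite X" and x: "x \<in> X" and y: "y \<in> X"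
  shows "real (card {g \<in> carrier G. \<phi> g x = y}) = real (order G) / real (card X)"
proof -
  have ga: "group_action G X \<phi>" using ta unfolding transitive_action_def by auto
  define S where "S y = {g \<in> carrier G. \<phi> g x = y}" for y
  have card_S: "card (S z) = card (S x)" if z: "z \<in> X" for z
  proof -
    obtain h where h: "h \<in> carrier G" "\<phi> h x = z"
      using transitive_action.unique_orbit[OF ta x z] by auto
    have "bij_betw (\<lambda>g. h \<otimes> g) (S x) (S z)"
    proof (rule bij_betwI[where g = "\<lambda>g. inv h \<otimes> g"])
      show "(\<lambda>g. h \<otimes> g) \<in> S x \<rightarrow> S z"
        using h group_action.composition_rule[OF ga x] by (auto simp: S_def)
      show "(\<lambda>g. inv h \<otimes> g) \<in> S z \<rightarrow> S x"
        using h z group_action.composition_rule[OF ga x inv_closed[OF h(1)]] act_inv_eq_iff[OF ga h(1) x z]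
        by (auto simp: S_def)
    qed (use h in \<open>auto simp: S_def\<close>)
    thus ?thesis by (simp add: bij_betw_same_card)
  qed
  have "carrier G = (\<Union>z\<in>X. S z)"
    using group_action.element_image[OF ga _ x] by (auto simp: S_def)
  hence "order G = card (\<Union>z\<in>X. S z)" unfolding Coset.order_def by simp
  also have "\<dots> = (\<Sum>z\<in>X. card (S z))"
    by (rule card_UN_disjoint[OF X]) (auto simp: S_def intro: finite_subset[OF _ finite_carrier])
  also have "\<dots> = card X * card (S y)" using card_S y by simp
  finally have "real (order G) = real (card X) * real (card (S y))" by simp
  moreover have "card X > 0" using x X card_gt_0_iff by blast
  ultimately show ?thesis unfolding S_def by (simp add: field_simps)
qed

lemma act_dist_translate:
  assumes ga: "group_action G X \<phi>" and F: "class_fun G F" and x: "x \<in> X" and y: "y \<in> X" and h: "h \<in> carrier G"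
  shows "act_dist G \<phi> F (\<phi> h x) y = act_dist G \<phi> F x (\<phi> (inv h) y)"
proof -
  have "act_dist G \<phi> F (\<phi> h x) y = (\<Sum>g\<in>carrier G. if \<phi> (g \<otimes> h) x = y then F g else 0)"
    unfolding act_dist_def by (intro sum.cong refl) (simp add: group_action.composition_rule[OF ga x _ h])
  also have "\<dots> = (\<Sum>v\<in>carrier G. if \<phi> (h \<otimes> v \<otimes> inv h \<otimes> h) x = y then F (h \<otimes> v \<otimes> inv h) else 0)"
    by (rule sum.reindex_bij_betw[OF bij_betw_conj[OF h], symmetric])
  also have "\<dots> = (\<Sum>v\<in>carrier G. if \<phi> v x = \<phi> (inv h) y then F v else 0)"
  proof (intro sum.cong refl)
    fix v assume v: "v \<in> carrier G"
    have vx: "\<phi> v x \<in> X" by (rule group_action.element_image[OF ga v x refl])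
    have "\<phi> (h \<otimes> v) x = y \<longleftrightarrow> \<phi> (inv h) y = \<phi> v x"
        using group_action.composition_rule[OF ga x h v] act_inv_eq_iff[OF ga h vx y] by simp
    hence "\<phi> (h \<otimes> v) x = y \<longleftrightarrow> \<phi> v x = \<phi> (inv h) y" by metis
    thus "(if \<phi> (h \<otimes> v \<otimes> inv h \<otimes> h) x = y then F (h \<otimes> v \<otimes> inv h) else 0)
        = (if \<phi> v x = \<phi> (inv h) y then F v else 0)"
      using F v h unfolding class_fun_def by (simp add: m_assoc)
  qed
  also have "\<dots> = act_dist G \<phi> F x (\<phi> (inv h) y)" unfolding act_dist_def ..
  finally show ?thesis .
qed

lemma sum_sq_act_dist_eq_row:
  assumes ta: "transitive_action G X \<phi>" and F: "class_fun G F" and x0: "x0 \<in> X"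
  shows "(\<Sum>x\<in>X. \<Sum>y\<in>X. (act_dist G \<phi> F x y)\<^sup>2) = real (card X) * (\<Sum>y\<in>X. (act_dist G \<phi> F x0 y)\<^sup>2)"
proof -
  have ga: "group_action G X \<phi>" using ta unfolding transitive_action_def by auto
  have "(\<Sum>y\<in>X. (act_dist G \<phi> F x y)\<^sup>2) = (\<Sum>y\<in>X. (act_dist G \<phi> F x0 y)\<^sup>2)" if x: "x \<in> X" for x
  proof -
    obtain h where h: "h \<in> carrier G" "\<phi> h x0 = x" using transitive_action.unique_orbit[OF ta x0 x] by auto
    have bij: "bij_betw (\<phi> (inv h)) X X"
      using group_action.bij_prop0[OF ga inv_closed[OF h(1)]] unfolding Bij_def by auto
    have "(\<Sum>y\<in>X. (act_dist G \<phi> F x y)\<^sup>2) = (\<Sum>y\<in>X. (act_dist G \<phi> F x0 (\<phi> (inv h) y))\<^sup>2)"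
      unfolding h(2)[symmetric] using act_dist_translate[OF ga F x0 _ h(1)] by simp
    also have "\<dots> = (\<Sum>y\<in>X. (act_dist G \<phi> F x0 y)\<^sup>2)" by (rule sum.reindex_bij_betw[OF bij])
    finally show ?thesis .
  qed
  thus ?thesis by simp
qed

lemma act_dist_diff_uniform:
  assumes ta: "transitive_action G X \<phi>" and X: "finite X" and x: "x \<in> X" and y: "y \<in> X"
  shows "act_dist G \<phi> (\<lambda>g. F g - 1 / real (order G)) x y = act_dist G \<phi> F x y - 1 / real (card X)"
proof -
  have "act_dist G \<phi> (\<lambda>g. F g - 1 / real (order G)) x y
     = act_dist G \<phi> F x y - (\<Sum>g\<in>carrier G. if \<phi> g x = y then 1 / real (order G) else 0)"
    unfolding act_dist_def by (subst sum_subtractf[symmetric]) (auto intro!: sum.cong)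
  also have "(\<Sum>g\<in>carrier G. if \<phi> g x = y then 1 / real (order G) else 0)
      = real (card {g \<in> carrier G. \<phi> g x = y}) * (1 / real (order G))"
    by (simp flip: sum.inter_filter[OF finite_carrier])
  also have "\<dots> = 1 / real (card X)"
    unfolding card_transporter[OF ta X x y] using order_pos by simp
  finally show ?thesis .
qed

end

lemma tv_norm_squared_le:
  assumes "finite X"
  shows "(tv_norm X h)\<^sup>2 \<le> 1/4 * (real (card X) * (\<Sum>x\<in>X. (h x)\<^sup>2))"
proof -
  have "(\<Sum>x\<in>X. \<bar>h x\<bar>)\<^sup>2 = (\<Sum>x\<in>X. \<Sum>y\<in>X. \<bar>h x\<bar> * \<bar>h y\<bar>)"
    by (simp add: power2_eq_square sum_product)
  also have "\<dots> \<le> (\<Sum>x\<in>X. \<Sum>y\<in>X. ((h x)\<^sup>2 + (h y)\<^sup>2) / 2)"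
  proof (intro sum_mono)
    fix x y
    have "0 \<le> (\<bar>h x\<bar> - \<bar>h y\<bar>)\<^sup>2" by simp
    thus "\<bar>h x\<bar> * \<bar>h y\<bar> \<le> ((h x)\<^sup>2 + (h y)\<^sup>2) / 2"
      by (simp add: power2_eq_square algebra_simps)
  qed
  also have "\<dots> = real (card X) * (\<Sum>x\<in>X. (h x)\<^sup>2)"
    by (simp add: add_divide_distrib sum.distrib sum_divide_distrib[symmetric] sum_distrib_left mult.commute)
  moreover have "(tv_norm X h)\<^sup>2 = 1/4 * (\<Sum>x\<in>X. \<bar>h x\<bar>)\<^sup>2"
    unfolding tv_norm_def by (simp add: power2_eq_square)
  ultimately show ?thesis by simp
qed

section \<open>The upper bound lemma\<close>

context finite_group
begin

lemma tv_norm_squared_act_dist_le: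
  assumes ta: "transitive_action G X \<phi>" and X: "finite X" and x0: "x0 \<in> X" and P: "class_fun G P"
  shows "(tv_norm X (\<lambda>x. act_dist G \<phi> P x0 x - 1 / real (card X)))\<^sup>2
    \<le> 1/4 * (\<Sum>x\<in>X. \<Sum>y\<in>X. (act_dist G \<phi> (\<lambda>g. P g - 1 / real (order G)) x y)\<^sup>2)"
proof -
  have F: "class_fun G (\<lambda>g. P g - 1 / real (order G))" using P unfolding class_fun_def by simp
  have "tv_norm X (\<lambda>x. act_dist G \<phi> P x0 x - 1 / real (card X))
      = tv_norm X (act_dist G \<phi> (\<lambda>g. P g - 1 / real (order G)) x0)"
    unfolding tv_norm_def using act_dist_diff_uniform[OF ta X x0]
    by (intro arg_cong[where f = "\<lambda>s. 1 / 2 * s"] sum.cong) auto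
  thus ?thesis
    using tv_norm_squared_le[OF X, of "act_dist G \<phi> (\<lambda>g. P g - 1 / real (order G)) x0"]
    by (simp add: sum_sq_act_dist_eq_row[OF ta F x0])
qed

lemma fourier_scalar_centered_triv:
  assumes rep: "is_rep G \<rho> d" and triv: "iso_rep G \<rho> d triv_rep 1" and P: "(\<Sum>g\<in>carrier G. P g) = 1"
  shows "fourier_scalar G (\<lambda>g. P g - 1 / real (order G)) \<rho> d = 0"
proof -
  have d: "d = 1" using triv unfolding iso_rep_def by simp
  have character: "character \<rho> d g = 1" if "g \<in> carrier G" for g
    using iso_triv_repD(2)[OF rep triv that] by (simp add: character_def d)
  have "fourier_scalar G (\<lambda>g. P g - 1 / real (order G)) \<rho> d = complex_of_real (\<Sum>g\<in>carrier G. P g - 1 / real (order G))"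
    unfolding fourier_scalar_def by (simp add: character cong: sum.cong) (simp add: d)
  also have "\<dots> = 0" using P order_pos by (simp add: sum_subtractf Coset.order_def)
  finally show ?thesis .
qed

lemma norm_fourier_scalar_centered_conv_word:
  fixes k :: nat and \<rho> :: "nat \<Rightarrow> 'g \<Rightarrow> complex mat" and d :: "nat \<Rightarrow> nat"
  assumes irr: "\<forall>j<k. irreducible_rep G (\<rho> j) (d j)"
    and noniso: "\<forall>j<k. \<forall>l<k. j \<noteq> l \<longrightarrow> \<not> iso_rep G (\<rho> j) (d j) (\<rho> l) (d l)"
    and Q_class: "\<And>i. i \<in> set w \<Longrightarrow> class_fun G (Q i)"
    and Q_sum: "\<And>i. i \<in> set w \<Longrightarrow> (\<Sum>g\<in>carrier G. Q i g) = 1"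
    and Q_expand: "\<And>i. i \<in> set w \<Longrightarrow> \<forall>g\<in>carrier G. complex_of_real (Q i g) = (\<Sum>l<k. a i l * character (\<rho> l) (d l) g)"
    and j: "j < k"
  shows "cmod (fourier_scalar G (\<lambda>g. conv_word G Q w g - 1 / real (order G)) (\<rho> j) (d j))
    = (if iso_rep G (\<rho> j) (d j) triv_rep 1 then 0
       else (real (order G) / real (d j)) ^ length w * cmod (\<Prod>i<length w. a (w ! i) j))"
proof (cases "iso_rep G (\<rho> j) (d j) triv_rep 1")
  case True
  thus ?thesis using irr j sum_conv_word[OF Q_sum]
    by (simp add: fourier_scalar_centered_triv irreducible_rep_is_rep)
next
  case False
  have "cmod (fourier_scalar G (\<lambda>g. conv_word G Q w g - 1 / real (order G)) (\<rho> j) (d j))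
      = (\<Prod>i<length w. cmod (fourier_scalar G (Q (w ! i)) (\<rho> j) (d j)))"
    using irr j False Q_class
    by (simp add: fourier_scalar_diff_const character_sum_nontriv fourier_scalar_conv_word prod_norm)
  also have "\<dots> = (\<Prod>i<length w. real (order G) / real (d j) * cmod (a (w ! i) j))"
    using Q_expand by (intro prod.cong refl norm_fourier_scalar_expansion[OF irr noniso _ j]) auto
  also have "\<dots> = (real (order G) / real (d j)) ^ length w * cmod (\<Prod>i<length w. a (w ! i) j)"
    by (simp only: prod.distrib prod_constant card_lessThan prod_norm)
  finally show ?thesis using False by simp
qed

end

theorem corollary1p5:
  fixes G :: "('g, 'b) monoid_scheme"
    and k :: nat and \<rho> :: "nat \<Rightarrow> 'g \<Rightarrow> complex mat" and d :: "nat \<Rightarrow> nat"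
    and m :: nat and Q :: "nat \<Rightarrow> 'g \<Rightarrow> real" and a :: "nat \<Rightarrow> nat \<Rightarrow> complex"
    and w :: "nat list"
    and X :: "'x set" and \<phi> :: "'g \<Rightarrow> 'x \<Rightarrow> 'x" and x0 :: 'x
    and xs :: "'x list" and mult :: "nat \<Rightarrow> nat"
  assumes "group G" and "finite (carrier G)"
    and irr: "\<forall>j<k. irreducible_rep G (\<rho> j) (d j)"
    and noniso: "\<forall>j<k. \<forall>l<k. j \<noteq> l \<longrightarrow> \<not> iso_rep G (\<rho> j) (d j) (\<rho> l) (d l)"
    and complete: "\<forall>(\<sigma> :: 'g \<Rightarrow> complex mat) e. irreducible_rep G \<sigma> e \<longrightarrow>
                      (\<exists>j<k. iso_rep G \<sigma> e (\<rho> j) (d j))"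
    and Q_nonneg: "\<forall>i<m. \<forall>g\<in>carrier G. Q i g \<ge> 0"
    and Q_sum: "\<forall>i<m. (\<Sum>g\<in>carrier G. Q i g) = 1"
    and Q_class: "\<forall>i<m. \<forall>g\<in>carrier G. \<forall>h\<in>carrier G.
                     Q i (h \<otimes>\<^bsub>G\<^esub> g \<otimes>\<^bsub>G\<^esub> inv\<^bsub>G\<^esub> h) = Q i g"
    and Q_expand: "\<forall>i<m. \<forall>g\<in>carrier G.
                     complex_of_real (Q i g) = (\<Sum>j<k. a i j * character (\<rho> j) (d j) g)"
    and w_letters: "\<forall>i\<in>set w. i < m"
    and "finite X" and "transitive_action G X \<phi>" and "x0 \<in> X"
    and "distinct xs" and "set xs = X"
    and mult: "iso_rep G (perm_rep \<phi> xs) (length xs)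
                 (fst (multiple_sum k \<rho> d mult)) (snd (multiple_sum k \<rho> d mult))"
  shows "(tv_norm X (\<lambda>x. act_dist G \<phi> (conv_word G Q w) x0 x - 1 / real (card X)))\<^sup>2
         \<le> 1/4 * (\<Sum>j\<in>{j. j < k \<and> \<not> iso_rep G (\<rho> j) (d j) triv_rep 1}.
               real (mult j) * real (d j) * (real (order G) / real (d j)) ^ (2 * length w)
               * (cmod (\<Prod>i<length w. a (w ! i) j))\<^sup>2)"
proof -
  interpret finite_group G using assms(1,2) by (simp add: finite_group_def finite_group_axioms_def)
  have ga: "group_action G X \<phi>" using \<open>transitive_action G X \<phi>\<close> unfolding transitive_action_def by auto
  have Q_class_fun: "class_fun G (Q i)" if "i \<in> set w" for i
    using Q_class w_letters that unfolding class_fun_def by auto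
  define F where "F g = conv_word G Q w g - 1 / real (order G)" for g
  have F: "class_fun G F" using class_fun_conv_word[OF Q_class_fun] unfolding F_def class_fun_def by simp
  have "(tv_norm X (\<lambda>x. act_dist G \<phi> (conv_word G Q w) x0 x - 1 / real (card X)))\<^sup>2
      \<le> 1/4 * (\<Sum>x\<in>X. \<Sum>y\<in>X. (act_dist G \<phi> F x y)\<^sup>2)"
    unfolding F_def using class_fun_conv_word[OF Q_class_fun]
    by (intro tv_norm_squared_act_dist_le[OF \<open>transitive_action G X \<phi>\<close> \<open>finite X\<close> \<open>x0 \<in> X\<close>])
  also have "(\<Sum>x\<in>X. \<Sum>y\<in>X. (act_dist G \<phi> F x y)\<^sup>2) = (\<Sum>j<k. real (mult j * d j) * (cmod (fourier_scalar G F (\<rho> j) (d j)))\<^sup>2)"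
    by (rule sum_sq_act_dist_plancherel[OF ga \<open>distinct xs\<close> \<open>set xs = X\<close> irr mult F])
  also have "\<dots> = (\<Sum>j\<in>{j. j < k \<and> \<not> iso_rep G (\<rho> j) (d j) triv_rep 1}.
               real (mult j) * real (d j) * (real (order G) / real (d j)) ^ (2 * length w)
               * (cmod (\<Prod>i<length w. a (w ! i) j))\<^sup>2)"
  proof -
    have "cmod (fourier_scalar G F (\<rho> j) (d j))
        = (if iso_rep G (\<rho> j) (d j) triv_rep 1 then 0
           else (real (order G) / real (d j)) ^ length w * cmod (\<Prod>i<length w. a (w ! i) j))" if "j < k" for j
      unfolding F_def using Q_class_fun w_letters Q_sum Q_expand that
      by (intro norm_fourier_scalar_centered_conv_word[OF irr noniso]) auto
    thus ?thesis by (intro sum.mono_neutral_cong_right) (auto simp: power_mult_distrib power_even_eq)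
  qed
  finally show ?thesis .
qed

end
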